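(* Let $(W,S)$ be a Coxeter group with Coxeter matrix $(m_{s,s'})_{(s,s')\in S\times S}$, and let $w\in W$. Let $C$ be a directed cycle in the edge-colored directed graph $\mathcal{R}(w)$. Let $c=[(s,t)]\in\mathfrak{M}/\sim$ be an equivalence class, and let $c^{\mathrm{op}}=[(t,s)]\in\mathfrak{M}/\sim$. Then: (a) The number of arcs colored $c$ appearing in $C$ equals the number of arcs colored $c^{\mathrm{op}}$ appearing in $C$. (b) The number of arcs whose color belongs to $\{c,c^{\mathrm{op}}\}$ appearing in $C$ is even.
   Context: A Coxeter group is a pair $(W,S)$ where $W$ is a group and $S$ a finite subset of $W$ such that there is a matrix $(m_{s,s'})\in\{1,2,3,\ldots,\infty\}^{S\times S}$ with $m_{s,s}=1$, $m_{s,t}=m_{t,s}\geq 2$ for distinct $s,t$, and $W$ is presented by generators $S$ and relations $(st)^{m_{s,t}}=1$ for all $(s,t)$ with $m_{s,t}\neq\infty$ (this is the Coxeter matrix; $m_{s,t}$ is the order of $st$). Let $\mathfrak{M}=\{(s,t)\in S\times S : s\neq t,\ m_{s,t}<\infty\}$. Define the equivalence relation $\sim$ on $\mathfrak{M}$ by $(s,t)\sim(s',t')$ iff there is $q\in W$ with $qsq^{-1}=s'$ and $qtq^{-1}=t'$; $[P]$ denotes the class of $P\in\mathfrak{M}$. A reduced expression for $w\in W$ is a tuple $(a_1,\ldots,a_k)$ of elements of $S$ with $w=a_1\cdots a_k$ and $k$ minimal. A factor of a word $(a_1,\ldots,a_k)$ is a contiguous subword $(a_{i+1},\ldots,a_{i+m})$.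 For $(s,t)\in\mathfrak{M}$ and reduced expressions $\vec a,\vec b$ of $w$, $\vec b$ is obtained from $\vec a$ by an $(s,t)$-braid move if $\vec b$ arises from $\vec a$ by replacing a factor of the form $(s,t,s,t,\ldots)$ ($m_{s,t}$ entries) by $(t,s,t,s,\ldots)$ ($m_{s,t}$ entries). The graph $\mathcal{R}(w)$ has as vertices the reduced expressions of $w$, and for every $(s,t)\in\mathfrak{M}$ and reduced expressions $\vec a,\vec b$ of $w$ such that $\vec b$ is obtained from $\vec a$ by an $(s,t)$-braid move, an arc from $\vec a$ to $\vec b$ colored $[(s,t)]$. *)

theory Defs
  imports "HOL-Algebra.Group" "HOL-Library.Extended_Nat"
begin

definition word_eval :: "('a, 'b) monoid_scheme \<Rightarrow> 'a list \<Rightarrow> 'a" where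
  "word_eval G xs = foldr (\<lambda>x y. x \<otimes>\<^bsub>G\<^esub> y) xs \<one>\<^bsub>G\<^esub>"

definition alt_word :: "'a \<Rightarrow> 'a \<Rightarrow> nat \<Rightarrow> 'a list" where
  "alt_word s t k = map (\<lambda>i. if even i then s else t) [0..<k]"

text \<open>The congruence on words over S generated by the Coxeter relations
  (s t)^(m s t) = 1 for m s t finite (for s = t this is s s = 1).\<close>
inductive_set cox_cong :: "'a set \<Rightarrow> ('a \<Rightarrow> 'a \<Rightarrow> enat) \<Rightarrow> ('a list \<times> 'a list) set"
  for S m where
  rel: "\<lbrakk>s \<in> S; t \<in> S; m s t = enat k\<rbrakk> \<Longrightarrow> (alt_word s t (2 * k), []) \<in> cox_cong S m"
| refl: "xs \<in> lists S \<Longrightarrow> (xs, xs) \<in> cox_cong S m"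
| sym: "(xs, ys) \<in> cox_cong S m \<Longrightarrow> (ys, xs) \<in> cox_cong S m"
| trans: "\<lbrakk>(xs, ys) \<in> cox_cong S m; (ys, zs) \<in> cox_cong S m\<rbrakk> \<Longrightarrow> (xs, zs) \<in> cox_cong S m"
| ctxt: "\<lbrakk>(xs, ys) \<in> cox_cong S m; u \<in> lists S; v \<in> lists S\<rbrakk>
          \<Longrightarrow> (u @ xs @ v, u @ ys @ v) \<in> cox_cong S m"

text \<open>Since every generator is an involution
  (relation for s = t), the group presentation amounts to: every element is a word
  over S, and two words over S are equal in G iff they are related by the
  congruence generated by the relations.\<close>
definition coxeter_system :: "('a, 'b) monoid_scheme \<Rightarrow> 'a set \<Rightarrow> ('a \<Rightarrow> 'a \<Rightarrow> enat) \<Rightarrow> bool" where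
  "coxeter_system G S m \<longleftrightarrow>
     group G \<and> finite S \<and> S \<subseteq> carrier G \<and>
     (\<forall>s\<in>S. m s s = 1) \<and>
     (\<forall>s\<in>S. \<forall>t\<in>S. s \<noteq> t \<longrightarrow> m s t = m t s \<and> m s t \<ge> 2) \<and>
     carrier G = word_eval G ` lists S \<and>
     (\<forall>xs\<in>lists S. \<forall>ys\<in>lists S. word_eval G xs = word_eval G ys \<longleftrightarrow> (xs, ys) \<in> cox_cong S m)"

definition braid_pairs :: "'a set \<Rightarrow> ('a \<Rightarrow> 'a \<Rightarrow> enat) \<Rightarrow> ('a \<times> 'a) set" where
  "braid_pairs S m = {(s, t). s \<in> S \<and> t \<in> S \<and> s \<noteq> t \<and> m s t \<noteq> \<infinity>}"

definition pair_conj :: "('a, 'b) monoid_scheme \<Rightarrow> 'a \<times> 'a \<Rightarrow> 'a \<times> 'a \<Rightarrow> bool" where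
  "pair_conj G P Q \<longleftrightarrow> (\<exists>q\<in>carrier G.
      q \<otimes>\<^bsub>G\<^esub> fst P \<otimes>\<^bsub>G\<^esub> inv\<^bsub>G\<^esub> q = fst Q \<and>
      q \<otimes>\<^bsub>G\<^esub> snd P \<otimes>\<^bsub>G\<^esub> inv\<^bsub>G\<^esub> q = snd Q)"

definition pair_class :: "('a, 'b) monoid_scheme \<Rightarrow> 'a set \<Rightarrow> ('a \<Rightarrow> 'a \<Rightarrow> enat) \<Rightarrow> 'a \<times> 'a \<Rightarrow> ('a \<times> 'a) set" where
  "pair_class G S m P = {Q \<in> braid_pairs S m. pair_conj G P Q}"

definition reduced_expr :: "('a, 'b) monoid_scheme \<Rightarrow> 'a set \<Rightarrow> 'a \<Rightarrow> 'a list \<Rightarrow> bool" where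
  "reduced_expr G S w xs \<longleftrightarrow> xs \<in> lists S \<and> word_eval G xs = w \<and>
     (\<forall>ys\<in>lists S. word_eval G ys = w \<longrightarrow> length xs \<le> length ys)"

definition braid_move :: "('a \<Rightarrow> 'a \<Rightarrow> enat) \<Rightarrow> 'a \<times> 'a \<Rightarrow> 'a list \<Rightarrow> 'a list \<Rightarrow> bool" where
  "braid_move m P xs ys \<longleftrightarrow> (\<exists>k u v. m (fst P) (snd P) = enat k \<and>
      xs = u @ alt_word (fst P) (snd P) k @ v \<and> ys = u @ alt_word (snd P) (fst P) k @ v)"

definition R_arcs :: "('a, 'b) monoid_scheme \<Rightarrow> 'a set \<Rightarrow> ('a \<Rightarrow> 'a \<Rightarrow> enat) \<Rightarrow> 'a
    \<Rightarrow> ('a list \<times> ('a \<times> 'a) \<times> 'a list) set" where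
  "R_arcs G S m w = {(xs, P, ys). P \<in> braid_pairs S m \<and> reduced_expr G S w xs \<and>
      reduced_expr G S w ys \<and> braid_move m P xs ys}"

definition arc_colour :: "('a, 'b) monoid_scheme \<Rightarrow> 'a set \<Rightarrow> ('a \<Rightarrow> 'a \<Rightarrow> enat)
    \<Rightarrow> ('a list \<times> ('a \<times> 'a) \<times> 'a list) \<Rightarrow> ('a \<times> 'a) set" where
  "arc_colour G S m e = pair_class G S m (fst (snd e))"

definition directed_cycle :: "('v \<times> 'c \<times> 'v) set \<Rightarrow> ('v \<times> 'c \<times> 'v) list \<Rightarrow> bool" where
  "directed_cycle A C \<longleftrightarrow> C \<noteq> [] \<and> set C \<subseteq> A \<and>
     (\<forall>i<length C. snd (snd (C ! i)) = fst (C ! ((Suc i) mod length C))) \<and>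
     distinct (map fst C)"

end

theory Submission
  imports Defs "HOL-Library.Multiset"
begin

text \<open>
  For a reduced word \<open>x = x\<^sub>1 \<cdots> x\<^sub>k\<close> the reflections \<open>x\<^sub>1 \<cdots> x\<^sub>i \<cdots> x\<^sub>1\<close> are pairwise
  distinct.  An \<open>(s, t)\<close>-braid move applied after a prefix \<open>u\<close> reverses the block of this
  sequence formed by the reflections of the dihedral subgroup generated by \<open>a = u s u\<inverse>\<close> and
  \<open>b = u t u\<inverse>\<close>, which it lists from \<open>a\<close> to \<open>b\<close>.  Two such dihedral subgroups sharing two
  reflections coincide (Kilmoyer's theorem), so the move changes the relative order of the
  reflections of no other dihedral subgroup.  Hence along a directed cycle of \<open>R(w)\<close> the arcs
  whose move is conjugate to \<open>(a, b)\<close> via its prefix are as many as those conjugate to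
  \<open>(b, a)\<close>.  Summing over the pairs of a conjugacy class gives (a); (b) follows because swapping
  the two components is a fixed-point-free involution on these pairs.  The Coxeter theory
  needed (exchange condition, Kilmoyer's theorem) is derived from the presentation through the
  fact that the parity of the number of occurrences of a reflection in the reflection sequence
  only depends on the group element.
\<close>

lemma alt_word_nth: "i < k \<Longrightarrow> alt_word s t k ! i = (if even i then s else t)"
  by (simp add: alt_word_def)

lemma length_alt_word [simp]: "length (alt_word s t k) = k"
  by (simp add: alt_word_def)

lemma alt_word_0 [simp]: "alt_word s t 0 = []"
  by (simp add: alt_word_def)

lemma alt_word_Suc: "alt_word s t (Suc k) = s # alt_word t s k"
  by (rule nth_equalityI) (auto simp: alt_word_nth nth_Cons split: nat.split)

lemma set_alt_word: "set (alt_word s t k) \<subseteq> {s, t}"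
  by (auto simp: alt_word_def)

lemma alt_word_in_lists: "s \<in> S \<Longrightarrow> t \<in> S \<Longrightarrow> alt_word s t k \<in> lists S"
  using set_alt_word[of s t k] by auto

lemma alt_word_add:
  "alt_word s t (n + j) = alt_word s t n @ (if even n then alt_word s t j else alt_word t s j)"
  by (rule nth_equalityI) (auto simp: alt_word_nth nth_append)

lemma rev_alt_word: "rev (alt_word t s k) = (if even k then alt_word s t k else alt_word t s k)"
proof (rule nth_equalityI)
  fix i assume "i < length (rev (alt_word t s k))"
  then have "i < k" by simp
  moreover have "even (k - Suc i) = (even i = odd k)" using \<open>i < k\<close> by presburger
  ultimately show "rev (alt_word t s k) ! i = (if even k then alt_word s t k else alt_word t s k) ! i"
    by (auto simp: rev_nth alt_word_nth)
qed simp

lemma alt_word_double: "alt_word s t k @ rev (alt_word t s k) = alt_word s t (2 * k)"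
  using alt_word_add[of s t k k] rev_alt_word[of t s k] by (simp add: mult_2)

lemma alt_word_odd_mirror:
  "alt_word s t n @ [if even n then s else t] @ rev (alt_word s t n) = alt_word s t (2 * n + 1)"
proof -
  have "alt_word s t (2 * n + 1) = alt_word s t n @ (if even n then alt_word s t (Suc n) else alt_word t s (Suc n))"
    using alt_word_add[of s t n "Suc n"] by (simp add: mult_2)
  then show ?thesis by (cases "even n") (simp_all add: rev_alt_word alt_word_Suc[of _ _ n])
qed

lemma rev_alt_word_odd: "rev (alt_word s t (2 * j + 1)) = alt_word s t (2 * j + 1)"
  using rev_alt_word[of t s "2 * j + 1"] rev_alt_word[of s t "2 * j + 1"] by simp

definition del_nth :: "nat \<Rightarrow> 'a list \<Rightarrow> 'a list" where
  "del_nth i xs = take i xs @ drop (Suc i) xs"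

lemma length_del_nth: "i < length xs \<Longrightarrow> length (del_nth i xs) = length xs - 1"
  by (simp add: del_nth_def)

lemma set_del_nth: "set (del_nth i xs) \<subseteq> set xs"
  by (auto simp: del_nth_def dest: in_set_takeD in_set_dropD)

lemma del_nth_in_lists: "xs \<in> lists A \<Longrightarrow> del_nth i xs \<in> lists A"
  using set_del_nth[of i xs] by auto

lemma del_nth_append_left: "i < length xs \<Longrightarrow> del_nth i (xs @ ys) = del_nth i xs @ ys"
  by (simp add: del_nth_def)

lemma del_nth_append_right:
  "length xs \<le> i \<Longrightarrow> del_nth i (xs @ ys) = xs @ del_nth (i - length xs) ys"
  by (simp add: del_nth_def Suc_diff_le)

lemma del_nth_rev: "i < length xs \<Longrightarrow> del_nth i (rev xs) = rev (del_nth (length xs - Suc i) xs)"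
  by (simp add: del_nth_def rev_take rev_drop Suc_diff_Suc)

lemma card_cyclic_descents_eq_ascents:
  fixes f :: "nat \<Rightarrow> bool"
  assumes "0 < n"
  shows "card {i. i < n \<and> f i \<and> \<not> f (Suc i mod n)} = card {i. i < n \<and> \<not> f i \<and> f (Suc i mod n)}"
proof -
  define A where "A = {i. i < n \<and> f i}"
  define B where "B = {i. i < n \<and> f (Suc i mod n)}"
  have "inj_on (\<lambda>i. Suc i mod n) B"
    by (auto simp: inj_on_def B_def mod_Suc split: if_splits)
  moreover have "(\<lambda>i. Suc i mod n) ` B = A"
  proof (intro equalityI subsetI)
    fix j assume "j \<in> A"
    then have "(n + j - 1) mod n \<in> B" and "Suc ((n + j - 1) mod n) mod n = j"
      using assms by (auto simp: A_def B_def mod_Suc_eq)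
    then show "j \<in> (\<lambda>i. Suc i mod n) ` B" by force
  qed (use assms in \<open>auto simp: A_def B_def\<close>)
  ultimately have "card A = card B" using card_image by fastforce
  moreover have "{i. i < n \<and> f i \<and> \<not> f (Suc i mod n)} = A - B"
    and "{i. i < n \<and> \<not> f i \<and> f (Suc i mod n)} = B - A"
    by (auto simp: A_def B_def)
  ultimately show ?thesis
    by (simp add: card_Diff_subset_Int A_def B_def Int_commute)
qed

lemma count_list_map_upt_double_period:
  assumes "\<And>i. f (i + k) = f i"
  shows "count_list (map f [0..<2 * k]) h = 2 * count_list (map f [0..<k]) h"
proof -
  have "[0..<2 * k] = [0..<k] @ [k..<k + k]"
    by (simp add: mult_2 upt_add_eq_append[of 0 k k])
  moreover have "map f [k..<k + k] = map f [0..<k]"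
    using assms by (simp flip: map_add_upt)
  ultimately show ?thesis by simp
qed

lemma even_size_if_involution_invariant:
  assumes "image_mset \<sigma> M = M" and "\<And>x. x \<in># M \<Longrightarrow> \<sigma> (\<sigma> x) = x \<and> \<sigma> x \<noteq> x"
  shows "even (size M)"
  using assms
proof (induction M rule: full_multiset_induct)
  case (less M)
  show ?case
  proof (cases "M = {#}")
    case False
    then obtain x where x: "x \<in># M" by blast
    then obtain M1 where M1: "M = add_mset x M1" by (metis multi_member_split)
    have "\<sigma> x \<in># M" using x less.prems(1) by (metis image_eqI set_image_mset)
    then have "\<sigma> x \<in># M1" using M1 less.prems(2)[OF x] by auto
    then obtain M2 where M2: "M1 = add_mset (\<sigma> x) M2" by (metis multi_member_split)
    have "add_mset (\<sigma> x) (add_mset x (image_mset \<sigma> M2)) = add_mset x (add_mset (\<sigma> x) M2)"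
      using less.prems(1) less.prems(2)[OF x] by (simp add: M1 M2)
    then have "image_mset \<sigma> M2 = M2" by (simp add: add_mset_commute)
    moreover have "M2 \<subset># M" by (simp add: M1 M2 subset_mset.less_le)
    ultimately have "even (size M2)" using less.IH less.prems(2) by (meson mset_subset_eqD subset_mset.less_imp_le)
    then show ?thesis by (simp add: M1 M2)
  qed simp
qed



context group
begin

lemma word_eval_Nil [simp]: "word_eval G [] = \<one>"
  by (simp add: word_eval_def)

lemma word_eval_Cons [simp]: "word_eval G (x # xs) = x \<otimes> word_eval G xs"
  by (simp add: word_eval_def)

lemma word_eval_closed [simp]: "set xs \<subseteq> carrier G \<Longrightarrow> word_eval G xs \<in> carrier G"
  by (induction xs) auto

lemma word_eval_append:
  "set xs \<subseteq> carrier G \<Longrightarrow> set ys \<subseteq> carrier G \<Longrightarrow> word_eval G (xs @ ys) = word_eval G xs \<otimes> word_eval G ys"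
  by (induction xs) (auto simp: m_assoc)

lemma inv_cancel_left [simp]: "a \<in> carrier G \<Longrightarrow> b \<in> carrier G \<Longrightarrow> inv a \<otimes> (a \<otimes> b) = b"
  by (simp add: m_assoc[symmetric])

lemma cancel_inv_left [simp]: "a \<in> carrier G \<Longrightarrow> b \<in> carrier G \<Longrightarrow> a \<otimes> (inv a \<otimes> b) = b"
  by (simp add: m_assoc[symmetric])

definition conjugate :: "'a \<Rightarrow> 'a \<Rightarrow> 'a" where
  "conjugate g h = g \<otimes> h \<otimes> inv g"

lemma conjugate_closed [simp]: "g \<in> carrier G \<Longrightarrow> h \<in> carrier G \<Longrightarrow> conjugate g h \<in> carrier G"
  by (simp add: conjugate_def)

lemma conjugate_one [simp]: "h \<in> carrier G \<Longrightarrow> conjugate \<one> h = h"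
  by (simp add: conjugate_def)

lemma conjugate_conjugate:
  "a \<in> carrier G \<Longrightarrow> b \<in> carrier G \<Longrightarrow> h \<in> carrier G \<Longrightarrow> conjugate a (conjugate b h) = conjugate (a \<otimes> b) h"
  by (simp add: conjugate_def m_assoc inv_mult_group)

lemma conjugate_inv_conjugate [simp]:
  "g \<in> carrier G \<Longrightarrow> h \<in> carrier G \<Longrightarrow> conjugate (inv g) (conjugate g h) = h"
  by (simp add: conjugate_conjugate)

lemma conjugate_conjugate_inv [simp]:
  "g \<in> carrier G \<Longrightarrow> h \<in> carrier G \<Longrightarrow> conjugate g (conjugate (inv g) h) = h"
  by (simp add: conjugate_conjugate)

lemma conjugate_eq_iff:
  "g \<in> carrier G \<Longrightarrow> h \<in> carrier G \<Longrightarrow> r \<in> carrier G \<Longrightarrow> conjugate g r = h \<longleftrightarrow> r = conjugate (inv g) h"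
  by auto

lemma conjugate_inj:
  "g \<in> carrier G \<Longrightarrow> a \<in> carrier G \<Longrightarrow> b \<in> carrier G \<Longrightarrow> conjugate g a = conjugate g b \<longleftrightarrow> a = b"
  by (metis conjugate_inv_conjugate)

lemma word_eval_map_conjugate:
  "g \<in> carrier G \<Longrightarrow> set xs \<subseteq> carrier G \<Longrightarrow> word_eval G (map (conjugate g) xs) = conjugate g (word_eval G xs)"
  by (induction xs) (auto simp: conjugate_def m_assoc)

lemma count_list_map_conjugate:
  "g \<in> carrier G \<Longrightarrow> h \<in> carrier G \<Longrightarrow> set xs \<subseteq> carrier G \<Longrightarrow>
   count_list (map (conjugate g) xs) h = count_list xs (conjugate (inv g) h)"
  by (induction xs) (auto simp: conjugate_eq_iff)

end

locale coxeter =
  fixes G :: "('a, 'b) monoid_scheme" (structure) and S :: "'a set" and m :: "'a \<Rightarrow> 'a \<Rightarrow> enat"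
  assumes coxeter: "coxeter_system G S m"
begin

sublocale group G
  using coxeter by (simp add: coxeter_system_def)

abbreviation ev :: "'a list \<Rightarrow> 'a" where
  "ev \<equiv> word_eval G"

lemma gens_closed: "S \<subseteq> carrier G"
  using coxeter unfolding coxeter_system_def by blast

lemma gen_closed [simp]: "s \<in> S \<Longrightarrow> s \<in> carrier G"
  using gens_closed by blast

lemma carrier_eq_words: "carrier G = ev ` lists S"
  using coxeter unfolding coxeter_system_def by blast

lemma ev_eq_iff_cox_cong:
  "xs \<in> lists S \<Longrightarrow> ys \<in> lists S \<Longrightarrow> ev xs = ev ys \<longleftrightarrow> (xs, ys) \<in> cox_cong S m"
  using coxeter unfolding coxeter_system_def by blast

lemma coxeter_matrix:
  "s \<in> S \<Longrightarrow> m s s = 1"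
  "s \<in> S \<Longrightarrow> t \<in> S \<Longrightarrow> s \<noteq> t \<Longrightarrow> m s t = m t s"
  "s \<in> S \<Longrightarrow> t \<in> S \<Longrightarrow> s \<noteq> t \<Longrightarrow> 2 \<le> m s t"
  using coxeter unfolding coxeter_system_def by blast+

lemma ev_closed_lists [simp]: "xs \<in> lists S \<Longrightarrow> ev xs \<in> carrier G"
  using gens_closed by (intro word_eval_closed) auto

lemma ev_append_lists [simp]: "xs \<in> lists S \<Longrightarrow> ys \<in> lists S \<Longrightarrow> ev (xs @ ys) = ev xs \<otimes> ev ys"
  using gens_closed by (intro word_eval_append) auto

lemma cox_cong_in_lists: "(xs, ys) \<in> cox_cong S m \<Longrightarrow> xs \<in> lists S \<and> ys \<in> lists S"
proof (induction rule: cox_cong.induct)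
  case (rel s t k)
  then show ?case by (simp add: alt_word_in_lists)
qed auto

lemma cox_cong_ev: "(xs, ys) \<in> cox_cong S m \<Longrightarrow> ev xs = ev ys"
  using cox_cong_in_lists ev_eq_iff_cox_cong by blast

lemma ev_alt_word_double [simp]:
  assumes "s \<in> S" "t \<in> S" "m s t = enat k"
  shows "ev (alt_word s t (2 * k)) = \<one>"
  using cox_cong_ev[OF cox_cong.rel[of s S t m k, OF assms]] by simp

lemma gen_square [simp]: "s \<in> S \<Longrightarrow> s \<otimes> s = \<one>"
  using ev_alt_word_double[of s s 1] coxeter_matrix(1)[of s]
  by (simp add: one_enat_def alt_word_def numeral_2_eq_2)

lemma inv_gen [simp]: "s \<in> S \<Longrightarrow> inv s = s"
  by (simp add: inv_equality)

lemma gen_cancel [simp]: "s \<in> S \<Longrightarrow> g \<in> carrier G \<Longrightarrow> s \<otimes> (s \<otimes> g) = g"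
  by (simp add: m_assoc[symmetric])

lemma ev_rev: "xs \<in> lists S \<Longrightarrow> ev (rev xs) = inv (ev xs)"
proof (induction xs)
  case (Cons x xs)
  then have "set (rev xs) \<subseteq> carrier G" "set [x] \<subseteq> carrier G"
    using gens_closed by auto
  then have "ev (rev (x # xs)) = inv (ev xs) \<otimes> x"
    using Cons by (simp add: word_eval_append)
  then show ?case
    using Cons.prems by (simp add: inv_mult_group)
qed simp

lemma braid_relation:
  assumes "s \<in> S" "t \<in> S" "m s t = enat k"
  shows "ev (alt_word s t k) = ev (alt_word t s k)"
proof -
  have lists: "alt_word s t k \<in> lists S" "rev (alt_word t s k) \<in> lists S"
    using assms alt_word_in_lists[of s S t k] alt_word_in_lists[of t S s k] by auto
  have "ev (alt_word s t k) \<otimes> inv (ev (alt_word t s k)) = ev (alt_word s t k @ rev (alt_word t s k))"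
    using lists assms by (simp add: ev_rev alt_word_in_lists)
  also have "\<dots> = \<one>"
    using assms by (simp add: alt_word_double)
  finally show ?thesis
    using lists assms by (metis alt_word_in_lists ev_closed_lists inv_equality inv_inv inv_closed)
qed

lemma ev_alt_word_odd_period:
  assumes "s \<in> S" "t \<in> S" "m s t = enat k"
  shows "ev (alt_word s t (2 * (i + k) + 1)) = ev (alt_word s t (2 * i + 1))"
proof -
  have "alt_word s t (2 * (i + k) + 1) = alt_word s t (2 * k) @ alt_word s t (2 * i + 1)"
    using alt_word_add[of s t "2 * k" "2 * i + 1"] by (simp add: algebra_simps)
  then show ?thesis
    using assms by (simp add: alt_word_in_lists)
qed

definition len :: "'a \<Rightarrow> nat" where
  "len g = (LEAST n. \<exists>xs\<in>lists S. ev xs = g \<and> length xs = n)"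

definition reduced :: "'a list \<Rightarrow> bool" where
  "reduced xs \<longleftrightarrow> xs \<in> lists S \<and> length xs = len (ev xs)"

lemma len_le_length: "xs \<in> lists S \<Longrightarrow> len (ev xs) \<le> length xs"
  unfolding len_def by (rule Least_le) auto

lemma reduced_word_exists:
  assumes "g \<in> carrier G"
  obtains xs where "reduced xs" "ev xs = g"
proof -
  obtain xs where "xs \<in> lists S" "ev xs = g"
    using assms carrier_eq_words by auto
  then have "\<exists>n. \<exists>xs\<in>lists S. ev xs = g \<and> length xs = n" by blast
  from LeastI_ex[OF this] obtain ys where "ys \<in> lists S" "ev ys = g" "length ys = len g"
    unfolding len_def by blast
  then show ?thesis
    by (intro that[of ys]) (simp_all add: reduced_def)
qed

lemma reduced_in_lists: "reduced xs \<Longrightarrow> xs \<in> lists S"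
  by (simp add: reduced_def)

lemma reduced_length: "reduced xs \<Longrightarrow> length xs = len (ev xs)"
  by (simp add: reduced_def)

lemma reduced_length_le: "reduced xs \<Longrightarrow> ys \<in> lists S \<Longrightarrow> ev ys = ev xs \<Longrightarrow> length xs \<le> length ys"
  using len_le_length[of ys] reduced_length[of xs] by simp

lemma reduced_expr_iff: "reduced_expr G S w xs \<longleftrightarrow> reduced xs \<and> ev xs = w"
proof
  assume "reduced_expr G S w xs"
  then have xs: "xs \<in> lists S" "ev xs = w"
    and min: "\<And>ys. ys \<in> lists S \<Longrightarrow> ev ys = w \<Longrightarrow> length xs \<le> length ys"
    by (simp_all add: reduced_expr_def)
  obtain ys where ys: "reduced ys" "ev ys = ev xs"
    using reduced_word_exists[OF ev_closed_lists[OF xs(1)]] by blast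
  have "length xs \<le> length ys"
    using min[OF reduced_in_lists[OF ys(1)]] ys(2) xs(2) by simp
  then have "length xs \<le> len (ev xs)"
    using reduced_length[OF ys(1)] ys(2) by simp
  then show "reduced xs \<and> ev xs = w"
    using len_le_length[OF xs(1)] xs unfolding reduced_def by simp
next
  assume "reduced xs \<and> ev xs = w"
  then show "reduced_expr G S w xs"
    using reduced_in_lists[of xs] reduced_length_le[of xs] by (auto simp: reduced_expr_def)
qed

lemma cox_cong_even_length: "(xs, ys) \<in> cox_cong S m \<Longrightarrow> even (length xs) = even (length ys)"
  by (induction rule: cox_cong.induct) auto

lemma even_len: "xs \<in> lists S \<Longrightarrow> even (len (ev xs)) = even (length xs)"
proof -
  assume xs: "xs \<in> lists S"
  then obtain ys where "reduced ys" "ev ys = ev xs"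
    using reduced_word_exists[OF ev_closed_lists] by blast
  moreover have "(ys, xs) \<in> cox_cong S m"
    using ev_eq_iff_cox_cong[OF _ xs] calculation reduced_in_lists by blast
  ultimately show ?thesis
    using cox_cong_even_length reduced_length by metis
qed

lemma len_one [simp]: "len \<one> = 0"
  using len_le_length[of "[]"] by simp

lemma len_gen [simp]: "len s = 1" if "s \<in> S"
proof -
  have "len s \<le> 1" and "odd (len s)"
    using len_le_length[of "[s]"] even_len[of "[s]"] that by simp_all
  then show ?thesis by presburger
qed

lemma len_mult_le:
  assumes "g \<in> carrier G" "h \<in> carrier G"
  shows "len (g \<otimes> h) \<le> len g + len h"
proof -
  obtain xs ys where xs: "reduced xs" "ev xs = g" and ys: "reduced ys" "ev ys = h"
    by (metis reduced_word_exists assms)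
  have "len (ev (xs @ ys)) \<le> length (xs @ ys)"
    using xs ys by (intro len_le_length) (simp add: reduced_in_lists)
  then show ?thesis
    using xs ys by (simp add: reduced_in_lists reduced_length)
qed

lemma even_len_mult:
  assumes "g \<in> carrier G" "h \<in> carrier G"
  shows "even (len (g \<otimes> h)) = (even (len g) = even (len h))"
proof -
  obtain xs ys where xs: "reduced xs" "ev xs = g" and ys: "reduced ys" "ev ys = h"
    by (metis reduced_word_exists assms)
  have "even (len (ev (xs @ ys))) = even (length (xs @ ys))"
    using xs ys by (intro even_len) (simp add: reduced_in_lists)
  then show ?thesis
    using xs ys by (simp add: reduced_in_lists reduced_length)
qed

lemma len_inv [simp]:
  assumes "g \<in> carrier G"
  shows "len (inv g) = len g"
proof -
  have le: "len (inv h) \<le> len h" if h: "h \<in> carrier G" for h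
  proof -
    obtain xs where "reduced xs" "ev xs = h"
      using reduced_word_exists[OF h] by blast
    then show ?thesis
      using len_le_length[of "rev xs"] by (auto simp: reduced_def ev_rev in_lists_conv_set)
  qed
  show ?thesis
    using le[OF assms] le[of "inv g"] assms by simp
qed

lemma len_mult_gen_left:
  assumes "s \<in> S" "g \<in> carrier G"
  shows "len (s \<otimes> g) = len g + 1 \<or> len (s \<otimes> g) + 1 = len g"
proof -
  have "len (s \<otimes> g) \<le> len g + 1"
    using len_mult_le[of s g] assms by simp
  moreover have "len g \<le> len (s \<otimes> g) + 1"
    using len_mult_le[of s "s \<otimes> g"] assms by simp
  moreover have "even (len (s \<otimes> g)) \<noteq> even (len g)"
    using even_len_mult[of s g] assms by simp
  ultimately show ?thesis
    by presburger
qed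

lemma len_mult_gen_right:
  assumes "s \<in> S" "g \<in> carrier G"
  shows "len (g \<otimes> s) = len g + 1 \<or> len (g \<otimes> s) + 1 = len g"
proof -
  have "inv (g \<otimes> s) = s \<otimes> inv g"
    using assms by (simp add: inv_mult_group)
  then have "len (g \<otimes> s) = len (s \<otimes> inv g)"
    using len_inv[of "g \<otimes> s"] assms by simp
  then show ?thesis
    using len_mult_gen_left[of s "inv g"] len_inv[of g] assms by simp
qed

section \<open>The reflection sequence of a word\<close>

lemma even_len_conjugate:
  assumes "g \<in> carrier G" "h \<in> carrier G"
  shows "even (len (conjugate g h)) = even (len h)"
  using assms even_len_mult[of "g \<otimes> h" "inv g"] even_len_mult[of g h]
  by (auto simp: conjugate_def)

lemma conjugate_ev_word:
  assumes "xs \<in> lists S" "s \<in> S"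
  shows "conjugate (ev xs) s = ev (xs @ [s] @ rev xs)"
proof -
  have "rev xs \<in> lists S"
    using assms(1) by (simp add: in_lists_conv_set)
  then show ?thesis
    using assms by (simp add: conjugate_def ev_rev m_assoc)
qed

text \<open>The \<open>i\<close>-th entry of \<open>refl_seq xs\<close> is the reflection \<open>x\<^sub>1 \<cdots> x\<^sub>i \<cdots> x\<^sub>1\<close>.\<close>
primrec refl_seq :: "'a list \<Rightarrow> 'a list" where
  "refl_seq [] = []"
| "refl_seq (a # xs) = a # map (conjugate a) (refl_seq xs)"

lemma length_refl_seq [simp]: "length (refl_seq xs) = length xs"
  by (induction xs) auto

lemma refl_seq_closed: "xs \<in> lists S \<Longrightarrow> set (refl_seq xs) \<subseteq> carrier G"
  by (induction xs) auto

lemma refl_seq_append: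
  assumes "xs \<in> lists S" "ys \<in> lists S"
  shows "refl_seq (xs @ ys) = refl_seq xs @ map (conjugate (ev xs)) (refl_seq ys)"
  using assms(1)
proof (induction xs)
  case Nil
  then show ?case
    using refl_seq_closed[OF assms(2)] by (simp add: map_idI subset_iff)
next
  case (Cons a xs)
  then have "a \<in> carrier G" "ev xs \<in> carrier G"
    by auto
  then have "map (conjugate a) (map (conjugate (ev xs)) (refl_seq ys))
      = map (conjugate (a \<otimes> ev xs)) (refl_seq ys)"
    using refl_seq_closed[OF assms(2)] by (auto simp: conjugate_conjugate)
  then show ?case
    using Cons by simp
qed

lemma refl_seq_nth:
  assumes "xs \<in> lists S" "i < length xs"
  shows "refl_seq xs ! i = conjugate (ev (take i xs)) (xs ! i)"
proof -
  have "xs = take i xs @ (xs ! i # drop (Suc i) xs)"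
    using assms(2) by (rule id_take_nth_drop)
  then have "refl_seq xs = refl_seq (take i xs) @ map (conjugate (ev (take i xs))) (refl_seq (xs ! i # drop (Suc i) xs))"
    using assms by (metis refl_seq_append append_in_lists_conv)
  then show ?thesis
    using assms(2) by (simp add: nth_append)
qed

lemma refl_seq_mult_ev:
  assumes "xs \<in> lists S" "i < length xs"
  shows "refl_seq xs ! i \<otimes> ev xs = ev (del_nth i xs)"
proof -
  define u v where "u = take i xs" and "v = drop (Suc i) xs"
  have xs: "xs = u @ xs ! i # v" and lists: "u \<in> lists S" "v \<in> lists S" "xs ! i \<in> S"
    using assms id_take_nth_drop[OF assms(2)] unfolding u_def v_def
    by (auto simp: in_lists_conv_set dest: in_set_takeD in_set_dropD)
  have "ev xs = ev u \<otimes> (xs ! i \<otimes> ev v)"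
    using lists by (subst xs) simp
  moreover have "refl_seq xs ! i = ev u \<otimes> xs ! i \<otimes> inv (ev u)"
    using refl_seq_nth[OF assms] by (simp add: conjugate_def u_def)
  ultimately have "refl_seq xs ! i \<otimes> ev xs = ev u \<otimes> xs ! i \<otimes> inv (ev u) \<otimes> (ev u \<otimes> (xs ! i \<otimes> ev v))"
    by simp
  also have "\<dots> = ev u \<otimes> ev v"
    using lists by (simp add: m_assoc)
  finally show ?thesis
    using lists by (simp add: del_nth_def u_def v_def)
qed

lemma refl_seq_square:
  assumes "xs \<in> lists S" "i < length xs"
  shows "refl_seq xs ! i \<otimes> refl_seq xs ! i = \<one>"
proof -
  have "take i xs \<in> lists S" "xs ! i \<in> S"
    using assms by (auto simp: in_lists_conv_set dest: in_set_takeD)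
  then show ?thesis
    using refl_seq_nth[OF assms] by (simp add: conjugate_def m_assoc)
qed

lemma refl_seq_alt_word:
  assumes "s \<in> S" "t \<in> S"
  shows "refl_seq (alt_word s t n) = map (\<lambda>i. ev (alt_word s t (2 * i + 1))) [0..<n]"
proof (induction n)
  case (Suc n)
  let ?c = "if even n then s else t"
  have "alt_word s t (Suc n) = alt_word s t n @ [?c]"
    using alt_word_add[of s t n 1] by (simp add: alt_word_def)
  moreover have "conjugate (ev (alt_word s t n)) ?c = ev (alt_word s t n @ [?c] @ rev (alt_word s t n))"
    using assms by (simp add: conjugate_ev_word alt_word_in_lists del: ev_append_lists)
  then have "conjugate (ev (alt_word s t n)) ?c = ev (alt_word s t (2 * n + 1))"
    by (simp only: alt_word_odd_mirror)
  ultimately show ?case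
    using Suc assms by (simp add: refl_seq_append alt_word_in_lists)
qed simp

text \<open>The defining relations are alternating words of length \<open>2k\<close>, whose reflection
  sequence is the sequence of the first \<open>k\<close> reflections repeated twice; so the parity of the
  number of occurrences of a fixed element in the reflection sequence is invariant under the
  relations, i.e.\ it only depends on the group element.  This replaces the usual
  construction of the reflection representation.\<close>
lemma cox_cong_even_count_refl_seq:
  "(xs, ys) \<in> cox_cong S m \<Longrightarrow> h \<in> carrier G \<Longrightarrow>
   even (count_list (refl_seq xs) h) = even (count_list (refl_seq ys) h)"
proof (induction arbitrary: h rule: cox_cong.induct)
  case (rel s t k)
  then show ?case
    using ev_alt_word_odd_period[OF rel.hyps] refl_seq_alt_word[OF rel.hyps(1,2)]
      count_list_map_upt_double_period[of "\<lambda>i. ev (alt_word s t (2 * i + 1))" k]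
    by simp
next
  case (ctxt xs ys u v)
  have lists: "xs \<in> lists S" "ys \<in> lists S"
    using ctxt.hyps(1) cox_cong_in_lists by auto
  have "ev xs = ev ys"
    using ctxt.hyps(1) cox_cong_ev by blast
  moreover have "even (count_list (refl_seq xs) (conjugate (inv (ev u)) h))
      = even (count_list (refl_seq ys) (conjugate (inv (ev u)) h))"
    using ctxt by simp
  ultimately show ?case
    using ctxt lists refl_seq_closed by (simp add: refl_seq_append count_list_map_conjugate)
qed auto

lemma even_count_refl_seq:
  "xs \<in> lists S \<Longrightarrow> ys \<in> lists S \<Longrightarrow> ev xs = ev ys \<Longrightarrow> h \<in> carrier G \<Longrightarrow>
   even (count_list (refl_seq xs) h) = even (count_list (refl_seq ys) h)"
  by (rule cox_cong_even_count_refl_seq, rule ev_eq_iff_cox_cong[THEN iffD1])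

section \<open>The exchange condition\<close>

text \<open>If \<open>b\<close> does not occur in the reflection sequence of \<open>y\<close>, the parity invariant
  applied to \<open>b # z\<close> (with \<open>z\<close> reduced for \<open>b \<otimes> ev y\<close>) puts \<open>b\<close> into the reflection
  sequence of \<open>z\<close>, and deleting the corresponding letter of \<open>z\<close> gives a word for \<open>ev y\<close>
  shorter than \<open>y\<close>.\<close>
lemma exchange_left:
  assumes b: "b \<in> S" and y: "reduced y" and shorter: "len (b \<otimes> ev y) < len (ev y)"
  shows "\<exists>i<length y. b \<otimes> ev y = ev (del_nth i y)"
proof (cases "b \<in> set (refl_seq y)")
  case True
  then obtain i where "i < length y" "refl_seq y ! i = b"
    by (auto simp: in_set_conv_nth)
  then show ?thesis
    using refl_seq_mult_ev[OF reduced_in_lists[OF y]] by auto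
next
  case False
  have yl: "y \<in> lists S"
    using y by (rule reduced_in_lists)
  obtain z where z: "reduced z" "ev z = b \<otimes> ev y"
    using reduced_word_exists[of "b \<otimes> ev y"] b yl by auto
  have zl: "z \<in> lists S"
    using z(1) by (rule reduced_in_lists)
  have "even (count_list (refl_seq (b # z)) b) = even (count_list (refl_seq y) b)"
    using b z yl zl by (intro even_count_refl_seq) auto
  moreover have "count_list (refl_seq (b # z)) b = 1 + count_list (refl_seq z) b"
    using count_list_map_conjugate[of b b "refl_seq z"] refl_seq_closed[OF zl] b
    by (simp add: conjugate_def)
  ultimately have "odd (count_list (refl_seq z) b)"
    using False by (simp add: count_list_0_iff)
  then have "count_list (refl_seq z) b \<noteq> 0"
    by (metis even_zero)
  then obtain i where i: "i < length z" "refl_seq z ! i = b"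
    by (auto simp: count_list_0_iff in_set_conv_nth)
  have "ev (del_nth i z) = ev y"
    using refl_seq_mult_ev[OF zl i(1)] i z b yl by simp
  then have "length y \<le> length (del_nth i z)"
    using reduced_length_le[OF y del_nth_in_lists[OF zl]] by simp
  then show ?thesis
    using shorter i length_del_nth[OF i(1)] reduced_length[OF y] reduced_length[OF z(1)] z(2)
    by simp
qed

lemma distinct_refl_seq:
  assumes y: "reduced y"
  shows "distinct (refl_seq y)"
proof (rule ccontr)
  assume "\<not> distinct (refl_seq y)"
  then obtain i j where ij: "i < j" "j < length y" "refl_seq y ! i = refl_seq y ! j"
    unfolding distinct_conv_nth by (auto elim!: linorder_neqE_nat)
  have yl: "y \<in> lists S"
    using y by (rule reduced_in_lists)
  let ?y' = "del_nth j y"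
  have yl': "?y' \<in> lists S"
    using yl by (rule del_nth_in_lists)
  have i: "i < length ?y'"
    using ij length_del_nth[OF ij(2)] by simp
  have "take i ?y' = take i y" "?y' ! i = y ! i"
    using ij by (simp_all add: del_nth_def nth_append)
  then have "refl_seq ?y' ! i = refl_seq y ! i"
    using refl_seq_nth[OF yl' i] refl_seq_nth[OF yl] ij by simp
  then have "ev (del_nth i ?y') = refl_seq y ! i \<otimes> (refl_seq y ! i \<otimes> ev y)"
    using refl_seq_mult_ev[OF yl' i] refl_seq_mult_ev[OF yl ij(2)] ij(3) by simp
  also have "\<dots> = ev y"
  proof -
    have "refl_seq y ! i \<in> carrier G"
      using refl_seq_closed[OF yl] ij by (auto dest: nth_mem)
    then show ?thesis
      using refl_seq_square[OF yl, of i] ij yl by (simp add: m_assoc[symmetric])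
  qed
  finally have "length y \<le> length (del_nth i ?y')"
    using reduced_length_le[OF y del_nth_in_lists[OF yl']] by simp
  then show False
    using ij length_del_nth[OF ij(2)] length_del_nth[OF i] i by simp
qed

lemma reduced_rev: "reduced y \<Longrightarrow> reduced (rev y)"
  by (auto simp: reduced_def ev_rev in_lists_conv_set)

lemma exchange_right:
  assumes b: "b \<in> S" and y: "reduced y" and shorter: "len (ev y \<otimes> b) < len (ev y)"
  shows "\<exists>i<length y. ev y \<otimes> b = ev (del_nth i y)"
proof -
  have yl: "y \<in> lists S"
    using y by (rule reduced_in_lists)
  have inv_eq: "inv (ev y \<otimes> b) = b \<otimes> ev (rev y)"
    using b yl by (simp add: inv_mult_group ev_rev)
  then have "len (b \<otimes> ev (rev y)) < len (ev (rev y))"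
    using shorter b yl len_inv[of "ev y \<otimes> b"] by (simp add: ev_rev)
  then obtain i where i: "i < length y" "b \<otimes> ev (rev y) = ev (del_nth i (rev y))"
    using exchange_left[OF b reduced_rev[OF y]] by auto
  have "ev y \<otimes> b = inv (ev (rev (del_nth (length y - Suc i) y)))"
    using inv_eq i b yl del_nth_rev[OF i(1)] by (metis ev_closed_lists gen_closed inv_inv m_closed)
  also have "\<dots> = ev (del_nth (length y - Suc i) y)"
    using yl by (simp add: ev_rev del_nth_in_lists)
  finally show ?thesis
    using i(1) by (intro exI[of _ "length y - Suc i"]) simp
qed

lemma reduced_subword_exists:
  "xs \<in> lists S \<Longrightarrow> \<exists>ys. reduced ys \<and> ev ys = ev xs \<and> set ys \<subseteq> set xs"
proof (induction xs rule: rev_induct)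
  case Nil
  then show ?case
    by (intro exI[of _ "[]"]) (simp add: reduced_def)
next
  case (snoc a xs)
  then obtain ys where ys: "reduced ys" "ev ys = ev xs" "set ys \<subseteq> set xs" and a: "a \<in> S"
    by auto
  have yl: "ys \<in> lists S"
    using ys(1) by (rule reduced_in_lists)
  have ev: "ev (xs @ [a]) = ev ys \<otimes> a"
    using snoc.prems ys(2) by simp
  from len_mult_gen_right[OF a ev_closed_lists[OF yl]] show ?case
  proof
    assume "len (ev ys \<otimes> a) = len (ev ys) + 1"
    then have "reduced (ys @ [a])"
      using yl a reduced_length[OF ys(1)] by (simp add: reduced_def)
    then show ?thesis
      using ev ys yl a by (intro exI[of _ "ys @ [a]"]) auto
  next
    assume shorter: "len (ev ys \<otimes> a) + 1 = len (ev ys)"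
    then obtain i where i: "i < length ys" "ev ys \<otimes> a = ev (del_nth i ys)"
      using exchange_right[OF a ys(1)] by force
    then have "reduced (del_nth i ys)"
      using shorter length_del_nth[OF i(1)] reduced_length[OF ys(1)] del_nth_in_lists[OF yl]
      by (simp add: reduced_def)
    moreover have "set (del_nth i ys) \<subseteq> set (xs @ [a])"
      using set_del_nth[of i ys] ys(3) by auto
    ultimately show ?thesis
      using ev i by (intro exI[of _ "del_nth i ys"]) auto
  qed
qed


section \<open>Standard parabolic subgroups and Kilmoyer's theorem\<close>

definition W :: "'a set \<Rightarrow> 'a set" where
  "W I = ev ` lists I"

lemma W_closed: "I \<subseteq> carrier G \<Longrightarrow> g \<in> W I \<Longrightarrow> g \<in> carrier G"
  unfolding W_def by (auto intro!: word_eval_closed)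

lemma one_in_W: "\<one> \<in> W I"
  unfolding W_def by (rule image_eqI[of _ _ "[]"]) auto

lemma gen_in_W: "a \<in> I \<Longrightarrow> I \<subseteq> carrier G \<Longrightarrow> a \<in> W I"
  unfolding W_def by (rule image_eqI[of _ _ "[a]"]) auto

lemma ev_in_W: "xs \<in> lists I \<Longrightarrow> ev xs \<in> W I"
  by (simp add: W_def)

lemma W_mult_closed:
  assumes "I \<subseteq> carrier G" "g \<in> W I" "h \<in> W I"
  shows "g \<otimes> h \<in> W I"
proof -
  obtain xs ys where "xs \<in> lists I" "ys \<in> lists I" "g = ev xs" "h = ev ys"
    using assms unfolding W_def by auto
  moreover from this have "set xs \<subseteq> carrier G" "set ys \<subseteq> carrier G"
    using assms(1) by auto
  ultimately show ?thesis
    unfolding W_def by (intro image_eqI[of _ _ "xs @ ys"]) (auto simp: word_eval_append)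
qed

lemma W_inv_closed:
  assumes "I \<subseteq> S" "g \<in> W I"
  shows "inv g \<in> W I"
proof -
  obtain xs where "xs \<in> lists I" "g = ev xs"
    using assms unfolding W_def by auto
  moreover from this have "xs \<in> lists S"
    using assms(1) by auto
  ultimately show ?thesis
    unfolding W_def by (intro image_eqI[of _ _ "rev xs"]) (auto simp: ev_rev in_lists_conv_set)
qed

lemma W_reduced_word:
  assumes "I \<subseteq> S" "g \<in> W I"
  obtains ys where "reduced ys" "ev ys = g" "ys \<in> lists I"
proof -
  obtain xs where xs: "xs \<in> lists I" "g = ev xs"
    using assms unfolding W_def by auto
  then obtain ys where "reduced ys" "ev ys = ev xs" "set ys \<subseteq> set xs"
    using assms(1) reduced_subword_exists[of xs] by auto
  with xs show ?thesis
    using that by auto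
qed

lemma W_len_one:
  assumes "I \<subseteq> S" "r \<in> W I" "len r = 1"
  shows "r \<in> I"
proof -
  obtain ys where ys: "reduced ys" "ev ys = r" "ys \<in> lists I"
    using W_reduced_word[OF assms(1,2)] .
  then obtain a where "ys = [a]"
    using reduced_length[OF ys(1)] assms(3) by (cases ys) auto
  with ys assms(1) show ?thesis
    by auto
qed

lemma W_conjugate:
  assumes "I \<subseteq> carrier G" "g \<in> carrier G"
  shows "conjugate g ` W I = W (conjugate g ` I)"
proof -
  have "conjugate g (ev xs) = ev (map (conjugate g) xs)" if "xs \<in> lists I" for xs
    using that assms by (subst word_eval_map_conjugate) auto
  then have "conjugate g ` W I = ev ` map (conjugate g) ` lists I"
    unfolding W_def by (auto simp: image_image intro!: image_cong)
  then show ?thesis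
    by (simp add: W_def lists_image)
qed

lemma W_conjugate_self:
  assumes I: "I \<subseteq> S" and a: "a \<in> W I"
  shows "conjugate a ` W I = W I"
proof -
  have IC: "I \<subseteq> carrier G"
    using I gens_closed by blast
  have sub: "conjugate b ` W I \<subseteq> W I" if "b \<in> W I" for b
    using that W_mult_closed[OF IC] W_inv_closed[OF I] by (auto simp: conjugate_def)
  have "W I \<subseteq> conjugate a ` W I"
  proof
    fix h assume h: "h \<in> W I"
    then have "conjugate (inv a) h \<in> W I"
      using sub[OF W_inv_closed[OF I a]] by blast
    moreover have "conjugate a (conjugate (inv a) h) = h"
      using a h W_closed[OF IC] by simp
    ultimately show "h \<in> conjugate a ` W I"
      by (metis image_eqI)
  qed
  with sub[OF a] show ?thesis
    by blast
qed

lemma reduced_tl: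
  assumes "reduced (b # ys)"
  shows "reduced ys"
proof -
  have bys: "b \<in> S" "ys \<in> lists S"
    using reduced_in_lists[OF assms] by auto
  have "length ys + 1 \<le> len (ev ys) + 1"
    using reduced_length[OF assms] len_mult_le[of b "ev ys"] bys by simp
  with len_le_length[OF bys(2)] bys(2) show ?thesis
    by (simp add: reduced_def)
qed

lemma exchange_append:
  assumes b: "b \<in> S" and red: "reduced (xs @ ys)"
    and shorter: "len (b \<otimes> ev (xs @ ys)) < len (ev (xs @ ys))"
  obtains i where "i < length xs" "b \<otimes> ev xs = ev (del_nth i xs)"
  | j where "j < length ys" "b \<otimes> ev xs \<otimes> ev ys = ev xs \<otimes> ev (del_nth j ys)"
proof -
  have xs: "xs \<in> lists S" and ys: "ys \<in> lists S"
    using reduced_in_lists[OF red] by auto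
  obtain k where k: "k < length (xs @ ys)" "b \<otimes> ev (xs @ ys) = ev (del_nth k (xs @ ys))"
    using exchange_left[OF b red shorter] by blast
  show ?thesis
  proof (cases "k < length xs")
    case True
    then have "b \<otimes> ev xs \<otimes> ev ys = ev (del_nth k xs) \<otimes> ev ys"
      using k(2) xs ys b by (simp add: del_nth_append_left del_nth_in_lists m_assoc)
    then have "b \<otimes> ev xs = ev (del_nth k xs)"
      using xs ys b by (simp add: del_nth_in_lists)
    with True show ?thesis
      by (rule that(1))
  next
    case False
    then have "b \<otimes> ev xs \<otimes> ev ys = ev xs \<otimes> ev (del_nth (k - length xs) ys)"
      using k(2) xs ys b by (simp add: del_nth_append_right del_nth_in_lists m_assoc)
    moreover have "k - length xs < length ys"
      using k(1) False by simp
    ultimately show ?thesis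
      by (rule that(2)[rotated])
  qed
qed

text \<open>If \<open>g\<^sub>0\<close> is of minimal length in its coset \<open>W I \<otimes> g\<^sub>0\<close>, then lengths add:
  inductively, if prepending a letter \<open>b\<close> of a reduced word of \<open>W I\<close> shortened the reduced
  word \<open>y @ z\<close> for \<open>ev y \<otimes> g\<^sub>0\<close>, the exchange condition would delete a letter either of \<open>y\<close>
  (contradicting that \<open>b # y\<close> is reduced) or of \<open>z\<close> (contradicting minimality of \<open>g\<^sub>0\<close>).\<close>
lemma len_mult_min_coset_rep_left_reduced:
  assumes I: "I \<subseteq> S" and g0: "g0 \<in> carrier G"
    and min: "\<And>u. u \<in> W I \<Longrightarrow> len g0 \<le> len (u \<otimes> g0)"
    and "reduced y" "y \<in> lists I"
  shows "len (ev y \<otimes> g0) = length y + len g0"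
proof -
  have IC: "I \<subseteq> carrier G"
    using I gens_closed by blast
  obtain z where z: "reduced z" "ev z = g0"
    using reduced_word_exists[OF g0] by blast
  have zl: "z \<in> lists S"
    using z(1) by (rule reduced_in_lists)
  from assms(4,5) show ?thesis
  proof (induction y)
    case (Cons b y)
    have y: "reduced y" "y \<in> lists I" and b: "b \<in> I" "b \<in> S"
      using reduced_tl[OF Cons.prems(1)] Cons.prems(2) I by auto
    have yl: "y \<in> lists S"
      using y(1) by (rule reduced_in_lists)
    have IH: "len (ev y \<otimes> g0) = length y + len g0"
      using Cons.IH y by blast
    have red: "reduced (y @ z)"
      using IH yl zl z reduced_length[OF z(1)] by (simp add: reduced_def)
    from len_mult_gen_left[OF b(2) m_closed[OF ev_closed_lists[OF yl] g0]] show ?case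
    proof
      assume "len (b \<otimes> (ev y \<otimes> g0)) = len (ev y \<otimes> g0) + 1"
      then show ?thesis
        using IH b(2) yl g0 by (simp add: m_assoc)
    next
      assume "len (b \<otimes> (ev y \<otimes> g0)) + 1 = len (ev y \<otimes> g0)"
      then have "len (b \<otimes> ev (y @ z)) < len (ev (y @ z))"
        using yl zl z by simp
      then show ?thesis
      proof (rule exchange_append[OF b(2) red])
        fix i assume i: "i < length y" "b \<otimes> ev y = ev (del_nth i y)"
        then have "length (b # y) \<le> length (del_nth i y)"
          using reduced_length_le[OF Cons.prems(1) del_nth_in_lists[OF yl]] by simp
        then show ?thesis
          using length_del_nth[OF i(1)] by simp
      next
        fix j assume j: "j < length z" "b \<otimes> ev y \<otimes> ev z = ev y \<otimes> ev (del_nth j z)"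
        have "ev (del_nth j z) = inv (ev y) \<otimes> (ev y \<otimes> ev (del_nth j z))"
          using yl del_nth_in_lists[OF zl] by simp
        also have "\<dots> = inv (ev y) \<otimes> b \<otimes> ev y \<otimes> g0"
          using j(2)[symmetric] z yl b(2) g0 by (simp add: m_assoc)
        finally have "ev (del_nth j z) = inv (ev y) \<otimes> b \<otimes> ev y \<otimes> g0" .
        moreover have "inv (ev y) \<otimes> b \<otimes> ev y \<in> W I"
          using ev_in_W[OF y(2)] W_mult_closed[OF IC] W_inv_closed[OF I] gen_in_W[OF b(1) IC]
          by simp
        ultimately have "len g0 \<le> len (ev (del_nth j z))"
          using min by metis
        moreover have "len (ev (del_nth j z)) < len g0"
          using len_le_length[OF del_nth_in_lists[OF zl, of j]] length_del_nth[OF j(1)] j(1)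
            reduced_length[OF z(1)] z(2) by simp
        ultimately show ?thesis
          by simp
      qed
    qed
  qed (use g0 in simp)
qed

lemma len_mult_min_coset_rep_left:
  assumes I: "I \<subseteq> S" and g0: "g0 \<in> carrier G"
    and min: "\<And>u. u \<in> W I \<Longrightarrow> len g0 \<le> len (u \<otimes> g0)"
    and u: "u \<in> W I"
  shows "len (u \<otimes> g0) = len u + len g0"
proof -
  obtain y where "reduced y" "ev y = u" "y \<in> lists I"
    using W_reduced_word[OF I u] .
  then show ?thesis
    using len_mult_min_coset_rep_left_reduced[OF I g0 min] reduced_length by metis
qed

lemma len_mult_min_coset_rep_right:
  assumes J: "J \<subseteq> S" and g0: "g0 \<in> carrier G"
    and min: "\<And>v. v \<in> W J \<Longrightarrow> len g0 \<le> len (g0 \<otimes> v)"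
    and v: "v \<in> W J"
  shows "len (g0 \<otimes> v) = len g0 + len v"
proof -
  have JC: "J \<subseteq> carrier G"
    using J gens_closed by blast
  have "len (inv g0) \<le> len (u \<otimes> inv g0)" if u: "u \<in> W J" for u
  proof -
    have "u \<otimes> inv g0 = inv (g0 \<otimes> inv u)"
      using W_closed[OF JC u] g0 by (simp add: inv_mult_group)
    then show ?thesis
      using min[OF W_inv_closed[OF J u]] W_closed[OF JC u] g0 by simp
  qed
  then have "len (inv v \<otimes> inv g0) = len (inv v) + len (inv g0)"
    using g0 W_inv_closed[OF J v] by (intro len_mult_min_coset_rep_left[OF J]) auto
  moreover have "inv v \<otimes> inv g0 = inv (g0 \<otimes> v)"
    using W_closed[OF JC v] g0 by (simp add: inv_mult_group)
  ultimately show ?thesis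
    using W_closed[OF JC v] g0 by simp
qed

definition min_double_coset_rep :: "'a set \<Rightarrow> 'a set \<Rightarrow> 'a \<Rightarrow> bool" where
  "min_double_coset_rep I J g \<longleftrightarrow> g \<in> carrier G \<and> (\<forall>u\<in>W I. \<forall>v\<in>W J. len g \<le> len (u \<otimes> g \<otimes> v))"

lemma min_double_coset_rep_len_add:
  assumes I: "I \<subseteq> S" and J: "J \<subseteq> S" and g0: "min_double_coset_rep I J g0"
  shows "u \<in> W I \<Longrightarrow> len (u \<otimes> g0) = len u + len g0"
    and "v \<in> W J \<Longrightarrow> len (g0 \<otimes> v) = len g0 + len v"
proof -
  have carr: "g0 \<in> carrier G" "I \<subseteq> carrier G" "J \<subseteq> carrier G"
    using g0 I J gens_closed by (auto simp: min_double_coset_rep_def)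
  have min: "len g0 \<le> len (u \<otimes> g0 \<otimes> v)" if "u \<in> W I" "v \<in> W J" for u v
    using g0 that by (simp add: min_double_coset_rep_def)
  have "len g0 \<le> len (u \<otimes> g0)" if "u \<in> W I" for u
    using min[OF that one_in_W] W_closed[OF carr(2) that] carr(1) by simp
  then show "u \<in> W I \<Longrightarrow> len (u \<otimes> g0) = len u + len g0"
    by (rule len_mult_min_coset_rep_left[OF I carr(1)])
  have "len g0 \<le> len (g0 \<otimes> v)" if "v \<in> W J" for v
    using min[OF one_in_W that] W_closed[OF carr(3) that] carr(1) by simp
  then show "v \<in> W J \<Longrightarrow> len (g0 \<otimes> v) = len g0 + len v"
    by (rule len_mult_min_coset_rep_right[OF J carr(1)])
qed

lemma kilmoyer_step:
  assumes I: "I \<subseteq> S" and J: "J \<subseteq> S" and g0: "min_double_coset_rep I J g0"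
    and b: "b \<in> I" and v: "v \<in> W J" and shorter: "len (b \<otimes> (g0 \<otimes> v)) < len (g0 \<otimes> v)"
  shows "\<exists>r\<in>J. b \<otimes> g0 = g0 \<otimes> r"
proof -
  have carr: "g0 \<in> carrier G" "I \<subseteq> carrier G" "J \<subseteq> carrier G" "b \<in> S"
    using g0 I J b gens_closed by (auto simp: min_double_coset_rep_def)
  have vc: "v \<in> carrier G"
    using W_closed[OF carr(3) v] .
  obtain zg where zg: "reduced zg" "ev zg = g0"
    using reduced_word_exists[OF carr(1)] .
  obtain zv where zv: "reduced zv" "ev zv = v" "zv \<in> lists J"
    using W_reduced_word[OF J v] .
  have lists: "zg \<in> lists S" "zv \<in> lists S"
    using zg(1) zv(1) by (simp_all add: reduced_in_lists)
  have "reduced (zg @ zv)"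
    using min_double_coset_rep_len_add(2)[OF I J g0 v] lists zg zv
    by (simp add: reduced_def reduced_length)
  moreover have "len (b \<otimes> ev (zg @ zv)) < len (ev (zg @ zv))"
    using shorter lists zg zv by simp
  ultimately show ?thesis
  proof (rule exchange_append[OF carr(4)])
    fix i assume i: "i < length zg" "b \<otimes> ev zg = ev (del_nth i zg)"
    have "len g0 \<le> len (b \<otimes> g0 \<otimes> \<one>)"
      using g0 gen_in_W[OF b carr(2)] one_in_W by (simp add: min_double_coset_rep_def)
    also have "\<dots> \<le> length (del_nth i zg)"
      using i(2) zg carr len_le_length[OF del_nth_in_lists[OF lists(1), of i]]
        ev_closed_lists[OF del_nth_in_lists[OF lists(1), of i]] by simp
    finally show ?thesis
      using length_del_nth[OF i(1)] i(1) reduced_length[OF zg(1)] zg(2) by simp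
  next
    fix j assume j: "j < length zv" "b \<otimes> ev zg \<otimes> ev zv = ev zg \<otimes> ev (del_nth j zv)"
    define r where "r = ev (del_nth j zv) \<otimes> inv v"
    have dW: "ev (del_nth j zv) \<in> W J"
      using zv(3) by (intro ev_in_W del_nth_in_lists)
    have rW: "r \<in> W J"
      unfolding r_def using W_mult_closed[OF carr(3) dW W_inv_closed[OF J v]] .
    have rc: "r \<in> carrier G"
      using W_closed[OF carr(3) rW] .
    have "b \<otimes> g0 = b \<otimes> g0 \<otimes> v \<otimes> inv v"
      using carr vc by (simp add: m_assoc)
    also have "\<dots> = g0 \<otimes> ev (del_nth j zv) \<otimes> inv v"
      using j(2) zg zv by simp
    also have "\<dots> = g0 \<otimes> r"
      using carr vc W_closed[OF carr(3) dW] by (simp add: r_def m_assoc)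
    finally have bg: "b \<otimes> g0 = g0 \<otimes> r" .
    have "len (b \<otimes> g0) = 1 + len g0"
      using min_double_coset_rep_len_add(1)[OF I J g0 gen_in_W[OF b carr(2)]] carr by simp
    moreover have "len (g0 \<otimes> r) = len g0 + len r"
      using min_double_coset_rep_len_add(2)[OF I J g0 rW] .
    ultimately have "r \<in> J"
      using bg W_len_one[OF J rW] by simp
    with bg show ?thesis
      by blast
  qed
qed

lemma kilmoyer:
  assumes I: "I \<subseteq> S" and J: "J \<subseteq> S" and g0: "min_double_coset_rep I J g0"
  shows "u \<in> W I \<Longrightarrow> v \<in> W J \<Longrightarrow> u \<otimes> g0 = g0 \<otimes> v \<Longrightarrow> u \<in> W (I \<inter> conjugate g0 ` J)"
proof (induction "len u" arbitrary: u v rule: less_induct)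
  case less
  have carr: "g0 \<in> carrier G" "I \<subseteq> carrier G" "J \<subseteq> carrier G"
    using g0 I J gens_closed by (auto simp: min_double_coset_rep_def)
  obtain y where y: "reduced y" "ev y = u" "y \<in> lists I"
    using W_reduced_word[OF I less.prems(1)] .
  show ?case
  proof (cases y)
    case Nil
    then show ?thesis
      using y one_in_W by auto
  next
    case (Cons b y')
    have b: "b \<in> I" "b \<in> S" and y': "reduced y'" "y' \<in> lists I"
      using y Cons I reduced_tl by auto
    define u' where "u' = ev y'"
    have u': "u' \<in> W I" "u' \<in> carrier G"
      using y' ev_in_W W_closed[OF carr(2)] by (auto simp: u'_def)
    have u_eq: "u = b \<otimes> u'" and len_u: "len u = Suc (len u')"
      using y Cons reduced_length[OF y(1)] reduced_length[OF y'(1)] by (simp_all add: u'_def)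
    have bu: "b \<otimes> (u \<otimes> g0) = u' \<otimes> g0"
      using u_eq b u' carr by (simp add: m_assoc)
    have "len (g0 \<otimes> v) = len u + len g0"
      using less.prems(3) min_double_coset_rep_len_add(1)[OF I J g0 less.prems(1)] by simp
    moreover have "len (b \<otimes> (g0 \<otimes> v)) = len u' + len g0"
      using less.prems(3) bu min_double_coset_rep_len_add(1)[OF I J g0 u'(1)] by simp
    ultimately have "len (b \<otimes> (g0 \<otimes> v)) < len (g0 \<otimes> v)"
      using len_u by simp
    then obtain r where r: "r \<in> J" "b \<otimes> g0 = g0 \<otimes> r"
      using kilmoyer_step[OF I J g0 b(1) less.prems(2)] by blast
    have rc: "r \<in> carrier G" and vc: "v \<in> carrier G"
      using r(1) carr(3) W_closed[OF carr(3) less.prems(2)] by auto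
    have "conjugate g0 r = b \<otimes> g0 \<otimes> inv g0"
      using r(2) by (simp add: conjugate_def)
    then have "b = conjugate g0 r"
      using carr b by (simp add: m_assoc)
    with b r have bK: "b \<in> I \<inter> conjugate g0 ` J"
      by blast
    have "u' \<otimes> g0 = b \<otimes> (g0 \<otimes> v)"
      using bu less.prems(3) by simp
    also have "\<dots> = b \<otimes> g0 \<otimes> v"
      using carr vc b by (simp add: m_assoc)
    also have "\<dots> = g0 \<otimes> (r \<otimes> v)"
      using r(2) carr rc vc by (simp add: m_assoc)
    finally have "u' \<otimes> g0 = g0 \<otimes> (r \<otimes> v)" .
    moreover have "r \<otimes> v \<in> W J"
      using W_mult_closed[OF carr(3) gen_in_W[OF r(1) carr(3)] less.prems(2)] .
    ultimately have "u' \<in> W (I \<inter> conjugate g0 ` J)"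
      using less.hyps[of u' "r \<otimes> v"] len_u u'(1) by simp
    then show ?thesis
      using u_eq W_mult_closed[of "I \<inter> conjugate g0 ` J"] gen_in_W[OF bK] carr bK
      by auto
  qed
qed

lemma min_double_coset_rep_exists:
  assumes I: "I \<subseteq> S" and J: "J \<subseteq> S" and g: "g \<in> carrier G"
  obtains u v where "u \<in> W I" "v \<in> W J" "min_double_coset_rep I J (u \<otimes> g \<otimes> v)"
proof -
  have IC: "I \<subseteq> carrier G" and JC: "J \<subseteq> carrier G"
    using I J gens_closed by blast+
  let ?D = "\<lambda>x. \<exists>u\<in>W I. \<exists>v\<in>W J. x = u \<otimes> g \<otimes> v"
  have "?D g"
    using one_in_W g by (metis l_one r_one m_closed one_closed)
  then obtain g0 where "?D g0" and least: "\<And>x. ?D x \<Longrightarrow> len g0 \<le> len x"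
    using ex_has_least_nat[of ?D g len] by blast
  then obtain u v where uv: "u \<in> W I" "v \<in> W J" "g0 = u \<otimes> g \<otimes> v"
    by blast
  have "len g0 \<le> len (u' \<otimes> g0 \<otimes> v')" if "u' \<in> W I" "v' \<in> W J" for u' v'
  proof (rule least)
    have "u' \<otimes> g0 \<otimes> v' = (u' \<otimes> u) \<otimes> g \<otimes> (v \<otimes> v')"
      using that uv g W_closed[OF IC] W_closed[OF JC] by (simp add: m_assoc)
    then show "?D (u' \<otimes> g0 \<otimes> v')"
      using that uv W_mult_closed[OF IC] W_mult_closed[OF JC] by blast
  qed
  moreover have "g0 \<in> carrier G"
    using uv g W_closed[OF IC] W_closed[OF JC] by simp
  ultimately show ?thesis
    using that uv by (simp add: min_double_coset_rep_def)
qed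

lemma W_conjugate_double_coset:
  assumes I: "I \<subseteq> S" and J: "J \<subseteq> S" and g: "g \<in> carrier G"
    and u: "u \<in> W I" and v: "v \<in> W J" and conj: "conjugate (u \<otimes> g \<otimes> v) ` J = I"
  shows "conjugate g ` W J = W I"
proof -
  have IC: "I \<subseteq> carrier G" and JC: "J \<subseteq> carrier G"
    using I J gens_closed by blast+
  have uc: "u \<in> carrier G" and vc: "v \<in> carrier G"
    using W_closed[OF IC u] W_closed[OF JC v] .
  have "conjugate g h = conjugate (inv u) (conjugate (u \<otimes> g \<otimes> v) (conjugate (inv v) h))"
    if "h \<in> carrier G" for h
    using that uc vc g by (simp add: conjugate_conjugate m_assoc)
  then have "conjugate g ` W J = conjugate (inv u) ` conjugate (u \<otimes> g \<otimes> v) ` conjugate (inv v) ` W J"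
    using W_closed[OF JC] by (simp add: image_image cong: image_cong)
  also have "\<dots> = W I"
    using W_conjugate_self[OF J W_inv_closed[OF J v]] W_conjugate[OF JC, of "u \<otimes> g \<otimes> v"]
      W_conjugate_self[OF I W_inv_closed[OF I u]] conj uc vc g by simp
  finally show ?thesis .
qed

lemma W_odd_subsingleton:
  assumes K: "K \<subseteq> S" and sub: "\<And>a b. a \<in> K \<Longrightarrow> b \<in> K \<Longrightarrow> a = b"
    and h: "h \<in> W K" and odd: "odd (len h)"
  shows "h \<in> K"
proof -
  obtain xs where xs: "xs \<in> lists K" "h = ev xs"
    using h unfolding W_def by auto
  have "ev xs \<in> insert \<one> K"
    using xs(1)
  proof (induction xs)
    case (Cons a xs)
    then have "a \<in> K" "ev xs = \<one> \<or> ev xs = a"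
      using sub by auto
    then show ?case
      using K by auto
  qed simp
  with xs odd show ?thesis
    by auto
qed

text \<open>After moving to a minimal representative \<open>g\<^sub>0\<close> of the double coset, both elements land in \<open>W {s, t} \<inter> g\<^sub>0 (W {s', t'}) g\<^sub>0\<inverse> = W K\<close> by Kilmoyer's
  theorem, and odd elements of \<open>W K\<close> lie in \<open>K\<close>; so \<open>K\<close> has two elements.\<close>
lemma W_pair_conjugate_eq:
  assumes I: "{s, t} \<subseteq> S" and J: "{s', t'} \<subseteq> S" and g: "g \<in> carrier G"
    and \<rho>: "\<rho>1 \<noteq> \<rho>2" "\<rho>1 \<in> W {s, t} \<inter> conjugate g ` W {s', t'}" "\<rho>2 \<in> W {s, t} \<inter> conjugate g ` W {s', t'}"
    and odd: "odd (len \<rho>1)" "odd (len \<rho>2)"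
  shows "conjugate g ` W {s', t'} = W {s, t}"
proof -
  define I' J' where "I' = {s, t}" and "J' = {s', t'}"
  have IC: "I' \<subseteq> carrier G" and JC: "J' \<subseteq> carrier G"
    using I J gens_closed by (auto simp: I'_def J'_def)
  obtain u v where uv: "u \<in> W I'" "v \<in> W J'" and g0: "min_double_coset_rep I' J' (u \<otimes> g \<otimes> v)"
    using min_double_coset_rep_exists[of I' J' g] I J g by (auto simp: I'_def J'_def)
  define g0 where "g0 = u \<otimes> g \<otimes> v"
  have carr: "u \<in> carrier G" "v \<in> carrier G" "g0 \<in> carrier G"
    using W_closed[OF IC uv(1)] W_closed[OF JC uv(2)] g by (simp_all add: g0_def)
  define K where "K = I' \<inter> conjugate g0 ` J'"
  have K: "K \<subseteq> S"
    using I by (auto simp: K_def I'_def)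
  have transport: "conjugate u \<rho> \<in> W K \<and> odd (len (conjugate u \<rho>))"
    if \<rho>: "\<rho> \<in> W I' \<inter> conjugate g ` W J'" "odd (len \<rho>)" for \<rho>
  proof -
    obtain b where b: "b \<in> W J'" "\<rho> = conjugate g b"
      using \<rho>(1) by auto
    have bc: "b \<in> carrier G" and \<rho>c: "\<rho> \<in> carrier G"
      using W_closed[OF JC b(1)] g b(2) by auto
    have "conjugate u \<rho> \<in> W I'"
      using W_conjugate_self[OF _ uv(1)] \<rho>(1) I by (auto simp: I'_def)
    moreover have "conjugate (inv v) b \<in> W J'"
      using W_conjugate_self[OF _ W_inv_closed[OF _ uv(2)]] b(1) J by (auto simp: J'_def)
    moreover have "conjugate u \<rho> \<otimes> g0 = g0 \<otimes> conjugate (inv v) b"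
      using b(2) carr bc g by (simp add: conjugate_def g0_def m_assoc)
    ultimately have "conjugate u \<rho> \<in> W K"
      unfolding K_def using kilmoyer[of I' J' g0] I J g0 by (auto simp: I'_def J'_def g0_def)
    then show ?thesis
      using \<rho>(2) even_len_conjugate[OF carr(1) \<rho>c] by simp
  qed
  have "\<exists>a\<in>K. \<exists>b\<in>K. a \<noteq> b"
  proof (rule ccontr)
    assume "\<not> ?thesis"
    then have sub: "\<And>a b. a \<in> K \<Longrightarrow> b \<in> K \<Longrightarrow> a = b"
      by blast
    have "conjugate u \<rho>1 = conjugate u \<rho>2"
      using transport[of \<rho>1] transport[of \<rho>2] \<rho> odd W_odd_subsingleton[OF K sub]
      by (metis I'_def J'_def sub)
    moreover have "\<rho>1 \<in> carrier G" "\<rho>2 \<in> carrier G"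
      using \<rho> W_closed[OF IC] by (auto simp: I'_def)
    ultimately show False
      using \<rho>(1) carr(1) by (simp add: conjugate_inj)
  qed
  then have "conjugate g0 ` J' = I'"
    by (auto simp: K_def I'_def J'_def)
  then show ?thesis
    using W_conjugate_double_coset[of I' J' g u v] I J g uv by (simp add: I'_def J'_def g0_def)
qed

section \<open>Reflections of rank-two parabolic subgroups\<close>

lemma ev_alt_word_odd_inv:
  "s \<in> S \<Longrightarrow> t \<in> S \<Longrightarrow> inv (ev (alt_word s t (2 * j + 1))) = ev (alt_word s t (2 * j + 1))"
  using ev_rev[OF alt_word_in_lists] rev_alt_word_odd by metis

lemma ev_alt_word_odd_mod:
  assumes st: "s \<in> S" "t \<in> S" "m s t = enat k"
  shows "ev (alt_word s t (2 * i + 1)) = ev (alt_word s t (2 * (i mod k) + 1))"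
proof -
  have "ev (alt_word s t (2 * (j + c * k) + 1)) = ev (alt_word s t (2 * j + 1))" for j c
  proof (induction c)
    case (Suc c)
    then show ?case
      using ev_alt_word_odd_period[OF st, of "j + c * k"] by (simp add: algebra_simps)
  qed simp
  from this[of "i mod k" "i div k"] show ?thesis
    by simp
qed

lemma ev_alt_word_odd_swap:
  assumes st: "s \<in> S" "t \<in> S" "m s t = enat k" and i: "i < k"
  shows "ev (alt_word t s (2 * i + 1)) = ev (alt_word s t (2 * (k - 1 - i) + 1))"
proof -
  have "2 * (k - 1 - i) + 1 + (2 * i + 1) = 2 * k"
    using i by simp
  moreover have "alt_word s t (2 * (k - 1 - i) + 1 + (2 * i + 1))
      = alt_word s t (2 * (k - 1 - i) + 1) @ alt_word t s (2 * i + 1)"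
    by (subst alt_word_add) simp
  ultimately have "alt_word s t (2 * k) = alt_word s t (2 * (k - 1 - i) + 1) @ alt_word t s (2 * i + 1)"
    by simp
  then have "ev (alt_word s t (2 * (k - 1 - i) + 1)) \<otimes> ev (alt_word t s (2 * i + 1)) = \<one>"
    using ev_alt_word_double[OF st] st by (simp add: alt_word_in_lists)
  then have "ev (alt_word t s (2 * i + 1)) = inv (ev (alt_word s t (2 * (k - 1 - i) + 1)))"
    using st by (metis alt_word_in_lists ev_closed_lists inv_equality inv_inv inv_closed)
  then show ?thesis
    using ev_alt_word_odd_inv st by simp
qed

lemma refl_seq_alt_word_swap:
  assumes st: "s \<in> S" "t \<in> S" "m s t = enat k"
  shows "refl_seq (alt_word t s k) = rev (refl_seq (alt_word s t k))"
proof (rule nth_equalityI)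
  fix i assume "i < length (refl_seq (alt_word t s k))"
  then have i: "i < k"
    by simp
  then show "refl_seq (alt_word t s k) ! i = rev (refl_seq (alt_word s t k)) ! i"
    using refl_seq_alt_word[of t s k] refl_seq_alt_word[of s t k] ev_alt_word_odd_swap[OF st i] st
    by (simp add: rev_nth)
qed simp

lemma word_eval_Cons_alt_word:
  assumes cd: "c \<in> S" "d \<in> S" and a: "a = c \<or> a = d"
  shows "\<exists>j'. (a \<otimes> ev (alt_word c d j) = ev (alt_word c d j') \<or> a \<otimes> ev (alt_word c d j) = ev (alt_word d c j'))
      \<and> even j' \<noteq> even j"
proof (cases "a = c")
  case True
  show ?thesis
  proof (cases j)
    case 0
    then show ?thesis
      using True cd by (intro exI[of _ 1]) (simp add: alt_word_Suc)
  next
    case (Suc j')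
    then have "a \<otimes> ev (alt_word c d j) = ev (alt_word d c j')"
      using True cd by (simp add: alt_word_Suc alt_word_in_lists)
    then show ?thesis
      using Suc by (intro exI[of _ j']) auto
  qed
next
  case False
  then have "a \<otimes> ev (alt_word c d j) = ev (alt_word d c (Suc j))"
    using a by (simp add: alt_word_Suc)
  then show ?thesis
    by (intro exI[of _ "Suc j"]) auto
qed

lemma ev_lists_pair_alt_word:
  assumes st: "s \<in> S" "t \<in> S" and xs: "xs \<in> lists {s, t}"
  shows "\<exists>j. (ev xs = ev (alt_word s t j) \<or> ev xs = ev (alt_word t s j)) \<and> even j = even (length xs)"
  using xs
proof (induction xs)
  case Nil
  then show ?case
    by (intro exI[of _ 0]) simp
next
  case (Cons a xs)
  then obtain j where j: "ev xs = ev (alt_word s t j) \<or> ev xs = ev (alt_word t s j)" "even j = even (length xs)"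
    by auto
  have a: "a = s \<or> a = t"
    using Cons by auto
  from j(1) show ?case
  proof
    assume xs: "ev xs = ev (alt_word s t j)"
    obtain j' where "a \<otimes> ev (alt_word s t j) = ev (alt_word s t j') \<or> a \<otimes> ev (alt_word s t j) = ev (alt_word t s j')"
      "even j' \<noteq> even j"
      using word_eval_Cons_alt_word[OF st a] by blast
    with xs j(2) show ?thesis
      by (intro exI[of _ j']) auto
  next
    assume xs: "ev xs = ev (alt_word t s j)"
    obtain j' where "a \<otimes> ev (alt_word t s j) = ev (alt_word t s j') \<or> a \<otimes> ev (alt_word t s j) = ev (alt_word s t j')"
      "even j' \<noteq> even j"
      using word_eval_Cons_alt_word[OF st(2,1)] a by blast
    with xs j(2) show ?thesis
      by (intro exI[of _ j']) auto
  qed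
qed

text \<open>For a conjugate \<open>(a, b)\<close> of a pair of simple generators these are exactly the
  reflections of the dihedral subgroup generated by \<open>a\<close> and \<open>b\<close>.\<close>
definition dihedral_refls :: "'a \<Rightarrow> 'a \<Rightarrow> 'a set" where
  "dihedral_refls a b = {h \<in> W {a, b}. odd (len h)}"

lemma set_refl_seq_alt_word:
  assumes st: "s \<in> S" "t \<in> S" "s \<noteq> t" and k: "m s t = enat k"
  shows "set (refl_seq (alt_word s t k)) = dihedral_refls s t"
proof -
  have refl_seq: "set (refl_seq (alt_word s t k)) = (\<lambda>i. ev (alt_word s t (2 * i + 1))) ` {..<k}"
    using refl_seq_alt_word[OF st(1,2)] by (auto simp: lessThan_atLeast0)
  have "0 < k"
    using coxeter_matrix(3)[OF st] k by (simp add: numeral_eq_enat)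
  have "h \<in> dihedral_refls s t" if "i < k" "h = ev (alt_word s t (2 * i + 1))" for i h
  proof -
    have "alt_word s t (2 * i + 1) \<in> lists {s, t}"
      using set_alt_word[of s t] by auto
    then show ?thesis
      using that even_len[OF alt_word_in_lists[OF st(1,2)]] by (auto simp: dihedral_refls_def W_def)
  qed
  moreover have "h \<in> (\<lambda>i. ev (alt_word s t (2 * i + 1))) ` {..<k}" if h: "h \<in> dihedral_refls s t" for h
  proof -
    obtain xs where xs: "xs \<in> lists {s, t}" "h = ev xs" "odd (len h)"
      using h unfolding dihedral_refls_def W_def by auto
    moreover have "xs \<in> lists S"
      using xs(1) st by auto
    ultimately have "odd (length xs)"
      using even_len[of xs] by auto
    with xs obtain j where j: "ev xs = ev (alt_word s t j) \<or> ev xs = ev (alt_word t s j)" "odd j"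
      using ev_lists_pair_alt_word[OF st(1,2) xs(1)] by auto
    then obtain i where i: "j = 2 * i + 1"
      by (metis oddE)
    have "i mod k < k" "k - 1 - i mod k < k"
      using \<open>0 < k\<close> by auto
    moreover have "m t s = enat k"
      using coxeter_matrix(2)[OF st] k by simp
    ultimately show ?thesis
      using j(1) xs(2) i ev_alt_word_odd_mod[OF st(1,2) k, of i] ev_alt_word_odd_mod[OF st(2,1), of k i]
        ev_alt_word_odd_swap[OF st(1,2) k, of "i mod k"] by auto
  qed
  ultimately show ?thesis
    using refl_seq by blast
qed

lemma conjugate_dihedral_refls:
  assumes q: "q \<in> carrier G" and st: "s \<in> S" "t \<in> S"
  shows "conjugate q ` dihedral_refls s t = dihedral_refls (conjugate q s) (conjugate q t)"
proof -
  have I: "{s, t} \<subseteq> carrier G"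
    using st by auto
  have WW: "conjugate q ` W {s, t} = W {conjugate q s, conjugate q t}"
    using W_conjugate[OF I q] by simp
  have "odd (len (conjugate q h)) = odd (len h)" if "h \<in> W {s, t}" for h
    using even_len_conjugate[OF q W_closed[OF I that]] by simp
  then show ?thesis
    unfolding dihedral_refls_def WW[symmetric] by auto
qed

definition simple_pair_conj :: "'a \<Rightarrow> 'a \<Rightarrow> bool" where
  "simple_pair_conj a b \<longleftrightarrow>
     (\<exists>q\<in>carrier G. \<exists>s\<in>S. \<exists>t\<in>S. s \<noteq> t \<and> a = conjugate q s \<and> b = conjugate q t)"

lemma simple_pair_conj_swap: "simple_pair_conj a b \<Longrightarrow> simple_pair_conj b a"
  unfolding simple_pair_conj_def by (metis (full_types))

lemma simple_pair_conj_distinct: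
  assumes "simple_pair_conj a b"
  shows "a \<noteq> b"
proof -
  obtain q s t where "q \<in> carrier G" "s \<in> S" "t \<in> S" "s \<noteq> t" "a = conjugate q s" "b = conjugate q t"
    using assms unfolding simple_pair_conj_def by blast
  then show ?thesis
    using conjugate_inj[of q s t] by simp
qed

lemma simple_pair_conj_in_dihedral_refls:
  assumes "simple_pair_conj a b"
  shows "a \<in> dihedral_refls a b" "b \<in> dihedral_refls a b"
proof -
  obtain q s t where q: "q \<in> carrier G" "s \<in> S" "t \<in> S" "a = conjugate q s" "b = conjugate q t"
    using assms unfolding simple_pair_conj_def by blast
  then have "odd (len a)" "odd (len b)" "{a, b} \<subseteq> carrier G"
    using even_len_conjugate[OF q(1)] by auto
  then show "a \<in> dihedral_refls a b" "b \<in> dihedral_refls a b"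
    unfolding dihedral_refls_def by (auto intro: gen_in_W)
qed

lemma dihedral_refls_eq:
  assumes ab: "simple_pair_conj a b" and cd: "simple_pair_conj c d"
    and \<rho>: "\<rho>1 \<noteq> \<rho>2" "{\<rho>1, \<rho>2} \<subseteq> dihedral_refls a b \<inter> dihedral_refls c d"
  shows "dihedral_refls a b = dihedral_refls c d"
proof -
  obtain q s t where q: "q \<in> carrier G" "s \<in> S" "t \<in> S" "a = conjugate q s" "b = conjugate q t"
    using ab unfolding simple_pair_conj_def by blast
  obtain q' s' t' where q': "q' \<in> carrier G" "s' \<in> S" "t' \<in> S" "c = conjugate q' s'" "d = conjugate q' t'"
    using cd unfolding simple_pair_conj_def by blast
  have W1: "W {a, b} = conjugate q ` W {s, t}" and W2: "W {c, d} = conjugate q' ` W {s', t'}"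
    using W_conjugate[of "{s, t}" q] W_conjugate[of "{s', t'}" q'] q q' by auto
  define \<rho>' where "\<rho>' \<rho> = conjugate (inv q) \<rho>" for \<rho>
  have transport: "\<rho>' \<rho> \<in> W {s, t} \<inter> conjugate (inv q \<otimes> q') ` W {s', t'} \<and> odd (len (\<rho>' \<rho>))"
    if "\<rho> \<in> dihedral_refls a b \<inter> dihedral_refls c d" for \<rho>
  proof -
    have \<rho>: "\<rho> \<in> W {a, b}" "\<rho> \<in> W {c, d}" "odd (len \<rho>)"
      using that by (auto simp: dihedral_refls_def)
    then obtain h where h: "h \<in> W {s, t}" "\<rho> = conjugate q h"
      using W1 by auto
    obtain h' where h': "h' \<in> W {s', t'}" "\<rho> = conjugate q' h'"
      using \<rho>(2) W2 by auto
    have hc: "h \<in> carrier G" "h' \<in> carrier G"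
      using W_closed[of "{s, t}"] W_closed[of "{s', t'}"] h(1) h'(1) q q' by auto
    have eq1: "\<rho>' \<rho> = h"
      using h(2) q(1) hc by (simp add: \<rho>'_def)
    have "conjugate (inv q \<otimes> q') h' = conjugate (inv q) (conjugate q' h')"
      using q(1) q'(1) hc by (simp add: conjugate_conjugate)
    also have "\<dots> = \<rho>' \<rho>"
      using h'(2) by (simp add: \<rho>'_def)
    finally have eq2: "\<rho>' \<rho> = conjugate (inv q \<otimes> q') h'" ..
    have "odd (len (\<rho>' \<rho>))"
      using \<rho>(3) even_len_conjugate[of "inv q" \<rho>] q(1) hc h(2) by (simp add: \<rho>'_def)
    with eq1 eq2 h(1) h'(1) show ?thesis
      by auto
  qed
  have \<rho>c: "\<rho>1 \<in> carrier G" "\<rho>2 \<in> carrier G"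
    using \<rho>(2) W_closed[of "{a, b}"] q by (auto simp: dihedral_refls_def)
  have pair: "conjugate (inv q \<otimes> q') ` W {s', t'} = W {s, t}"
    using W_pair_conjugate_eq[of s t s' t' "inv q \<otimes> q'" "\<rho>' \<rho>1" "\<rho>' \<rho>2"] transport \<rho> \<rho>c q q'
    by (auto simp: \<rho>'_def conjugate_inj)
  have "W {c, d} = conjugate q' ` W {s', t'}"
    by (rule W2)
  also have "\<dots> = conjugate q ` conjugate (inv q \<otimes> q') ` W {s', t'}"
    unfolding image_image
  proof (rule image_cong[OF HOL.refl])
    fix h assume "h \<in> W {s', t'}"
    then have "h \<in> carrier G"
      using W_closed[of "{s', t'}"] q'(2,3) by auto
    then show "conjugate q' h = conjugate q (conjugate (inv q \<otimes> q') h)"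
      using q(1) q'(1) by (simp add: conjugate_conjugate)
  qed
  also have "\<dots> = W {a, b}"
    unfolding pair W1 ..
  finally show ?thesis
    by (simp add: dihedral_refls_def)
qed

section \<open>Braid arcs and the order of reflections\<close>

text \<open>An arc does not record where its braid move takes place, so the prefix \<open>u\<close> (and with
  it the conjugated pair \<open>(u s u\<inverse>, u t u\<inverse>)\<close>) is chosen by Hilbert choice.\<close>
definition arc_pair :: "'a list \<times> ('a \<times> 'a) \<times> 'a list \<Rightarrow> 'a \<times> 'a" where
  "arc_pair e = (case e of (x, (s, t), y) \<Rightarrow>
     SOME p. \<exists>k u v. m s t = enat k \<and> x = u @ alt_word s t k @ v \<and> y = u @ alt_word t s k @ v
       \<and> p = (conjugate (ev u) s, conjugate (ev u) t))"

lemma R_arcsD: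
  assumes "(x, (s, t), y) \<in> R_arcs G S m w"
  shows "s \<in> S" "t \<in> S" "s \<noteq> t" "reduced x" "reduced y" "ev x = w" "ev y = w"
  using assms by (auto simp: R_arcs_def braid_pairs_def reduced_expr_iff)

lemma R_arcs_arc_pairE:
  assumes "(x, (s, t), y) \<in> R_arcs G S m w"
  obtains k u v where "m s t = enat k" "x = u @ alt_word s t k @ v" "y = u @ alt_word t s k @ v"
    "arc_pair (x, (s, t), y) = (conjugate (ev u) s, conjugate (ev u) t)"
proof -
  obtain k u v where "m s t = enat k" "x = u @ alt_word s t k @ v" "y = u @ alt_word t s k @ v"
    using assms by (auto simp: R_arcs_def braid_move_def)
  then have "\<exists>p. \<exists>k u v. m s t = enat k \<and> x = u @ alt_word s t k @ v \<and> y = u @ alt_word t s k @ v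
      \<and> p = (conjugate (ev u) s, conjugate (ev u) t)"
    by blast
  from someI_ex[OF this] show ?thesis
    using that unfolding arc_pair_def by auto
qed

lemma simple_pair_conj_arc_pair:
  assumes e: "e \<in> R_arcs G S m w"
  shows "simple_pair_conj (fst (arc_pair e)) (snd (arc_pair e))"
proof -
  obtain x s t y where e_eq: "e = (x, (s, t), y)"
    by (metis prod.exhaust)
  then have arc: "(x, (s, t), y) \<in> R_arcs G S m w"
    using e by simp
  obtain k u v where "x = u @ alt_word s t k @ v" "arc_pair e = (conjugate (ev u) s, conjugate (ev u) t)"
    using R_arcs_arc_pairE[OF arc] e_eq by metis
  moreover have "x \<in> lists S"
    using R_arcsD(4)[OF arc] by (rule reduced_in_lists)
  ultimately have "ev u \<in> carrier G" "arc_pair e = (conjugate (ev u) s, conjugate (ev u) t)"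
    by auto
  then show ?thesis
    using R_arcsD(1-3)[OF arc] unfolding simple_pair_conj_def by auto
qed

lemma refl_seq_braid_move:
  assumes arc: "(x, (s, t), y) \<in> R_arcs G S m w" and p: "arc_pair (x, (s, t), y) = (c, d)"
  obtains B R1 R2 where "refl_seq x = R1 @ B @ R2" "refl_seq y = R1 @ rev B @ R2"
    "set B = dihedral_refls c d" "B \<noteq> []" "hd B = c" "last B = d"
proof -
  obtain k u v where k: "m s t = enat k" and xy: "x = u @ alt_word s t k @ v" "y = u @ alt_word t s k @ v"
    and cd: "(c, d) = (conjugate (ev u) s, conjugate (ev u) t)"
    using R_arcs_arc_pairE[OF arc] p by metis
  have st: "s \<in> S" "t \<in> S" "s \<noteq> t"
    using R_arcsD[OF arc] by auto
  have lists: "u \<in> lists S" "v \<in> lists S" "alt_word s t k \<in> lists S" "alt_word t s k \<in> lists S"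
    using reduced_in_lists[OF R_arcsD(4)[OF arc]] xy(1) alt_word_in_lists[of s S t k]
      alt_word_in_lists[of t S s k] st by auto
  have "0 < k"
    using coxeter_matrix(3)[OF st] k by (simp add: numeral_eq_enat)
  then obtain k' where k': "k = Suc k'"
    using not0_implies_Suc by blast
  define B where "B = map (conjugate (ev u)) (refl_seq (alt_word s t k))"
  define R2 where "R2 = map (conjugate (ev u)) (map (conjugate (ev (alt_word s t k))) (refl_seq v))"
  have "refl_seq x = refl_seq u @ B @ R2"
    using xy(1) lists by (simp add: refl_seq_append B_def R2_def)
  moreover have "refl_seq y = refl_seq u @ rev B @ R2"
    using xy(2) lists braid_relation[OF st(1,2) k] refl_seq_alt_word_swap[OF st(1,2) k]
    by (simp add: refl_seq_append B_def R2_def rev_map)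
  moreover have "set B = dihedral_refls c d"
    using set_refl_seq_alt_word[OF st k] conjugate_dihedral_refls[of "ev u" s t] st lists cd
    by (simp add: B_def)
  moreover have "hd B = c" "B \<noteq> []"
    using k' cd st by (simp_all add: B_def alt_word_Suc)
  moreover have "last B = d"
  proof -
    have "rev B = map (conjugate (ev u)) (refl_seq (alt_word t s k))"
      using refl_seq_alt_word_swap[OF st(1,2) k] by (simp add: B_def rev_map)
    then have "hd (rev B) = d"
      using k' cd by (simp add: alt_word_Suc)
    then show ?thesis
      by (simp add: hd_rev)
  qed
  ultimately show ?thesis
    using that by blast
qed

definition dihedral_from_to :: "'a list \<Rightarrow> 'a \<Rightarrow> 'a \<Rightarrow> bool" where
  "dihedral_from_to x a b \<longleftrightarrow> (let rs = filter (\<lambda>r. r \<in> dihedral_refls a b) (refl_seq x)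
     in rs \<noteq> [] \<and> hd rs = a \<and> last rs = b)"

lemma filter_block_subsingleton:
  assumes "\<And>r r'. r \<in> set B \<Longrightarrow> r' \<in> set B \<Longrightarrow> P r \<Longrightarrow> P r' \<Longrightarrow> r = r'" and "distinct B"
  shows "filter P (R1 @ rev B @ R2) = filter P (R1 @ B @ R2)"
proof -
  have "distinct (filter P B)" "\<forall>r\<in>set (filter P B). \<forall>r'\<in>set (filter P B). r = r'"
    using assms by auto
  then have "length (filter P B) \<le> 1"
    by (metis distinct_card card_le_Suc0_iff_eq finite_set One_nat_def)
  then have "rev (filter P B) = filter P B"
    by (cases "filter P B") auto
  then show ?thesis
    by (simp add: rev_filter)
qed

lemma braid_arc_flips_order:
  assumes arc: "(x, (s, t), y) \<in> R_arcs G S m w" and ab: "simple_pair_conj a b"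
  shows "dihedral_from_to x a b \<and> \<not> dihedral_from_to y a b \<longleftrightarrow> arc_pair (x, (s, t), y) = (a, b)"
    and "\<not> dihedral_from_to x a b \<and> dihedral_from_to y a b \<longleftrightarrow> arc_pair (x, (s, t), y) = (b, a)"
proof -
  obtain c d where p: "arc_pair (x, (s, t), y) = (c, d)"
    by (metis surj_pair)
  obtain B R1 R2 where x: "refl_seq x = R1 @ B @ R2" and y: "refl_seq y = R1 @ rev B @ R2"
    and B: "set B = dihedral_refls c d" "B \<noteq> []" "hd B = c" "last B = d"
    by (rule refl_seq_braid_move[OF arc p])
  have cd: "simple_pair_conj c d"
    using simple_pair_conj_arc_pair[OF arc] p by simp
  define R where "R = dihedral_refls a b"
  have "distinct (R1 @ B @ R2)"
    using distinct_refl_seq[OF R_arcsD(4)[OF arc]] x by simp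
  then have disj: "set R1 \<inter> set B = {}" "set R2 \<inter> set B = {}" and "distinct B"
    by auto
  have in_R: "a \<in> R" "b \<in> R" and "a \<noteq> b" "c \<noteq> d" "c \<in> set B" "d \<in> set B"
    using simple_pair_conj_in_dihedral_refls[OF ab] simple_pair_conj_distinct[OF ab]
      simple_pair_conj_distinct[OF cd] simple_pair_conj_in_dihedral_refls[OF cd] B(1)
    by (auto simp: R_def)
  have from_to: "dihedral_from_to z a b \<longleftrightarrow> (let rs = filter (\<lambda>r. r \<in> R) (refl_seq z) in rs \<noteq> [] \<and> hd rs = a \<and> last rs = b)"
    for z
    by (simp add: dihedral_from_to_def R_def)
  have "(dihedral_from_to x a b \<and> \<not> dihedral_from_to y a b \<longleftrightarrow> (c, d) = (a, b))
      \<and> (\<not> dihedral_from_to x a b \<and> dihedral_from_to y a b \<longleftrightarrow> (c, d) = (b, a))"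
  proof (cases "\<exists>r1 r2. r1 \<noteq> r2 \<and> {r1, r2} \<subseteq> R \<inter> set B")
    case True
    then have "R = set B"
      using dihedral_refls_eq[OF ab cd] B(1) by (auto simp: R_def)
    moreover have "filter (\<lambda>r. r \<in> set B) R1 = []" "filter (\<lambda>r. r \<in> set B) R2 = []"
      using disj by (auto simp: filter_empty_conv)
    ultimately have "filter (\<lambda>r. r \<in> R) (refl_seq x) = B" "filter (\<lambda>r. r \<in> R) (refl_seq y) = rev B"
      using x y by (simp_all add: filter_True)
    then have "dihedral_from_to x a b \<longleftrightarrow> c = a \<and> d = b" "dihedral_from_to y a b \<longleftrightarrow> d = a \<and> c = b"
      using B(2-4) by (simp_all add: from_to hd_rev last_rev)
    with \<open>a \<noteq> b\<close> show ?thesis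
      by auto
  next
    case False
    then have "filter (\<lambda>r. r \<in> R) (refl_seq y) = filter (\<lambda>r. r \<in> R) (refl_seq x)"
      unfolding x y by (intro filter_block_subsingleton \<open>distinct B\<close>) auto
    then have "dihedral_from_to y a b = dihedral_from_to x a b"
      by (simp add: from_to)
    moreover have "(c, d) \<noteq> (a, b)" "(c, d) \<noteq> (b, a)"
      using False in_R \<open>a \<noteq> b\<close> \<open>c \<in> set B\<close> \<open>d \<in> set B\<close> by auto
    ultimately show ?thesis
      by simp
  qed
  with p show "dihedral_from_to x a b \<and> \<not> dihedral_from_to y a b \<longleftrightarrow> arc_pair (x, (s, t), y) = (a, b)"
    and "\<not> dihedral_from_to x a b \<and> dihedral_from_to y a b \<longleftrightarrow> arc_pair (x, (s, t), y) = (b, a)"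
    by simp_all
qed

text \<open>Around a directed cycle every arc with pair \<open>(a, b)\<close> switches the order of the
  reflections of \<open>\<langle>a, b\<rangle>\<close> from \<open>a \<dots> b\<close> to the opposite one, and arcs with pair \<open>(b, a)\<close> switch
  it back; no other arc changes it.  So both kinds of switches occur equally often.\<close>
lemma count_arc_pair_swap:
  assumes C: "directed_cycle (R_arcs G S m w) C"
  shows "count_list (map arc_pair C) (a, b) = count_list (map arc_pair C) (b, a)"
proof (cases "simple_pair_conj a b")
  case True
  define n where "n = length C"
  have "0 < n" and arcs: "set C \<subseteq> R_arcs G S m w"
    and next_arc: "\<And>i. i < n \<Longrightarrow> snd (snd (C ! i)) = fst (C ! (Suc i mod n))"
    using C by (auto simp: directed_cycle_def n_def)
  define f where "f i = dihedral_from_to (fst (C ! i)) a b" for i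
  have flips: "(arc_pair (C ! i) = (a, b) \<longleftrightarrow> f i \<and> \<not> f (Suc i mod n))
      \<and> (arc_pair (C ! i) = (b, a) \<longleftrightarrow> \<not> f i \<and> f (Suc i mod n))" if i: "i < n" for i
  proof -
    obtain x s t y where e: "C ! i = (x, (s, t), y)"
      by (metis prod.exhaust)
    then have "(x, (s, t), y) \<in> R_arcs G S m w" "y = fst (C ! (Suc i mod n))"
      using arcs nth_mem[of i C] next_arc[OF i] i by (auto simp: n_def)
    then show ?thesis
      using braid_arc_flips_order[OF _ True] e by (simp add: f_def)
  qed
  have count: "count_list (map arc_pair C) p = card {i. i < n \<and> arc_pair (C ! i) = p}" for p
  proof -
    have "{i. i < n \<and> p = map arc_pair C ! i} = {i. i < n \<and> arc_pair (C ! i) = p}"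
      by (auto simp: n_def)
    then show ?thesis
      by (simp add: count_list_eq_length_filter length_filter_conv_card n_def)
  qed
  have "count_list (map arc_pair C) (a, b) = card {i. i < n \<and> f i \<and> \<not> f (Suc i mod n)}"
    unfolding count using flips by (metis (no_types, lifting))
  also have "\<dots> = card {i. i < n \<and> \<not> f i \<and> f (Suc i mod n)}"
    using card_cyclic_descents_eq_ascents[OF \<open>0 < n\<close>] .
  also have "\<dots> = count_list (map arc_pair C) (b, a)"
    unfolding count using flips by (metis (no_types, lifting))
  finally show ?thesis .
next
  case False
  have "simple_pair_conj (fst p) (snd p)" if "p \<in> set (map arc_pair C)" for p
    using that simple_pair_conj_arc_pair C by (auto simp: directed_cycle_def)
  then have "(a, b) \<notin> set (map arc_pair C)" "(b, a) \<notin> set (map arc_pair C)"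
    using False simple_pair_conj_swap by fastforce+
  then show ?thesis
    by (simp add: count_list_0_iff)
qed

lemma pair_conj_iff: "pair_conj G P Q \<longleftrightarrow> (\<exists>q\<in>carrier G. conjugate q (fst P) = fst Q \<and> conjugate q (snd P) = snd Q)"
  by (simp add: pair_conj_def conjugate_def)

lemma pair_conj_refl: "fst P \<in> carrier G \<Longrightarrow> snd P \<in> carrier G \<Longrightarrow> pair_conj G P P"
  unfolding pair_conj_iff by (intro bexI[of _ \<one>]) auto

lemma pair_conj_sym:
  assumes "fst P \<in> carrier G" "snd P \<in> carrier G" "pair_conj G P Q"
  shows "pair_conj G Q P"
  using assms unfolding pair_conj_iff by (metis conjugate_inv_conjugate inv_closed)

lemma pair_conj_trans:
  assumes "fst P \<in> carrier G" "snd P \<in> carrier G" "pair_conj G P Q" "pair_conj G Q R"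
  shows "pair_conj G P R"
  using assms unfolding pair_conj_iff by (metis conjugate_conjugate m_closed)

lemma pair_conj_swap: "pair_conj G (t, s) p \<longleftrightarrow> pair_conj G (s, t) (prod.swap p)"
  unfolding pair_conj_iff by (cases p) auto

lemma braid_pairs_closed: "P \<in> braid_pairs S m \<Longrightarrow> fst P \<in> carrier G \<and> snd P \<in> carrier G"
  by (auto simp: braid_pairs_def)

lemma pair_class_eq_iff:
  assumes P: "P \<in> braid_pairs S m" and Q: "Q \<in> braid_pairs S m"
  shows "pair_class G S m P = pair_class G S m Q \<longleftrightarrow> pair_conj G P Q"
proof
  assume eq: "pair_class G S m P = pair_class G S m Q"
  have "Q \<in> pair_class G S m Q"
    using Q pair_conj_refl braid_pairs_closed[OF Q] by (simp add: pair_class_def)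
  then have "Q \<in> pair_class G S m P"
    by (simp add: eq)
  then show "pair_conj G P Q"
    by (simp add: pair_class_def)
next
  assume "pair_conj G P Q"
  moreover have "pair_conj G Q P"
    using pair_conj_sym braid_pairs_closed[OF P] calculation by blast
  ultimately show "pair_class G S m P = pair_class G S m Q"
    unfolding pair_class_def using pair_conj_trans braid_pairs_closed[OF P] braid_pairs_closed[OF Q]
    by blast
qed

lemma arc_colour_eq_iff:
  assumes e: "e \<in> R_arcs G S m w" and st: "(s, t) \<in> braid_pairs S m"
  shows "arc_colour G S m e = pair_class G S m (s, t) \<longleftrightarrow> pair_conj G (s, t) (arc_pair e)"
proof -
  obtain x s' t' y where e_eq: "e = (x, (s', t'), y)"
    by (metis prod.exhaust)
  then have arc: "(x, (s', t'), y) \<in> R_arcs G S m w"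
    using e by simp
  then have P: "(s', t') \<in> braid_pairs S m"
    by (simp add: R_arcs_def)
  obtain k u v where "x = u @ alt_word s' t' k @ v" "arc_pair e = (conjugate (ev u) s', conjugate (ev u) t')"
    using R_arcs_arc_pairE[OF arc] e_eq by metis
  moreover have "x \<in> lists S"
    using R_arcsD(4)[OF arc] by (rule reduced_in_lists)
  ultimately have "ev u \<in> carrier G" "arc_pair e = (conjugate (ev u) s', conjugate (ev u) t')"
    by auto
  then have conj: "pair_conj G (s', t') (arc_pair e)"
    unfolding pair_conj_iff by auto
  have carr: "fst (s, t) \<in> carrier G" "snd (s, t) \<in> carrier G"
    "fst (s', t') \<in> carrier G" "snd (s', t') \<in> carrier G"
    using braid_pairs_closed[OF st] braid_pairs_closed[OF P] by auto
  have "arc_colour G S m e = pair_class G S m (s, t) \<longleftrightarrow> pair_conj G (s', t') (s, t)"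
    using pair_class_eq_iff[OF P st] e_eq by (simp add: arc_colour_def)
  also have "\<dots> \<longleftrightarrow> pair_conj G (s, t) (arc_pair e)"
    using pair_conj_sym[OF carr(3,4) conj] pair_conj_trans conj pair_conj_sym carr by metis
  finally show ?thesis .
qed


lemma arc_colour_eq_swap_iff:
  assumes e: "e \<in> R_arcs G S m w" and st: "(s, t) \<in> braid_pairs S m"
  shows "arc_colour G S m e = pair_class G S m (t, s) \<longleftrightarrow> pair_conj G (s, t) (prod.swap (arc_pair e))"
proof -
  have "(t, s) \<in> braid_pairs S m"
    using st coxeter_matrix(2) by (auto simp: braid_pairs_def)
  then show ?thesis
    using arc_colour_eq_iff[OF e] pair_conj_swap by simp
qed
end

lemma swap_invariant_pair_counts:
  fixes ps :: "('a \<times> 'a) list"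
  assumes sym: "\<And>a b. count_list ps (a, b) = count_list ps (b, a)"
    and off_diagonal: "\<And>p. p \<in> set ps \<Longrightarrow> fst p \<noteq> snd p"
  shows "length (filter (Q \<circ> prod.swap) ps) = length (filter Q ps)"
    and "even (length (filter (\<lambda>p. Q p \<or> Q (prod.swap p)) ps))"
proof -
  let ?M = "mset ps"
  have inv: "image_mset prod.swap M = M" if "\<And>p. count M p = count M (prod.swap p)" for M :: "('a \<times> 'a) multiset"
  proof (rule multiset_eqI)
    fix p :: "'a \<times> 'a"
    have "prod.swap -` {p} = {prod.swap p}"
      by auto
    then show "count (image_mset prod.swap M) p = count M p"
      using that[of p] by (simp add: count_image_mset Int_insert_left not_in_iff)
  qed
  have M: "image_mset prod.swap ?M = ?M"
  proof (rule inv)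
    fix p :: "'a \<times> 'a"
    show "count ?M p = count ?M (prod.swap p)"
      using sym[of "fst p" "snd p"] by (cases p) (simp add: count_mset)
  qed
  have "length (filter (Q \<circ> prod.swap) ps) = size (image_mset prod.swap (filter_mset (Q \<circ> prod.swap) ?M))"
    by (metis mset_filter size_mset size_image_mset)
  also have "\<dots> = size (filter_mset Q (image_mset prod.swap ?M))"
    using image_mset_filter_mset_swap[of prod.swap Q ?M] by (simp add: comp_def)
  also have "\<dots> = size (filter_mset Q ?M)"
    by (simp only: M)
  also have "\<dots> = length (filter Q ps)"
    by (metis mset_filter size_mset)
  finally show "length (filter (Q \<circ> prod.swap) ps) = length (filter Q ps)" .
  let ?N = "filter_mset (\<lambda>p. Q p \<or> Q (prod.swap p)) ?M"
  have "image_mset prod.swap ?N = filter_mset (\<lambda>p. Q p \<or> Q (prod.swap p)) (image_mset prod.swap ?M)"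
    using image_mset_filter_mset_swap[of prod.swap "\<lambda>p. Q p \<or> Q (prod.swap p)" ?M]
    by (simp add: disj_commute)
  then have "image_mset prod.swap ?N = ?N"
    by (simp only: M)
  then have "even (size ?N)"
  proof (rule even_size_if_involution_invariant)
    fix p assume "p \<in># ?N"
    then have "fst p \<noteq> snd p"
      using off_diagonal by simp
    then show "prod.swap (prod.swap p) = p \<and> prod.swap p \<noteq> p"
      by (cases p) simp
  qed
  then show "even (length (filter (\<lambda>p. Q p \<or> Q (prod.swap p)) ps))"
    by (metis mset_filter size_mset)
qed

theorem theorem2p3:
  fixes G :: "('a, 'b) monoid_scheme" and S :: "'a set" and m :: "'a \<Rightarrow> 'a \<Rightarrow> enat"
    and w :: 'a and C :: "('a list \<times> ('a \<times> 'a) \<times> 'a list) list" and s t :: 'a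
  assumes "coxeter_system G S m"
    and "w \<in> carrier G"
    and "directed_cycle (R_arcs G S m w) C"
    and "(s, t) \<in> braid_pairs S m"
  shows "length (filter (\<lambda>e. arc_colour G S m e = pair_class G S m (s, t)) C)
           = length (filter (\<lambda>e. arc_colour G S m e = pair_class G S m (t, s)) C)
         \<and> even (length (filter (\<lambda>e. arc_colour G S m e \<in>
           {pair_class G S m (s, t), pair_class G S m (t, s)}) C))"
proof -
  interpret coxeter G S m
    by (rule coxeter.intro) (rule assms(1))
  have arcs: "\<And>e. e \<in> set C \<Longrightarrow> e \<in> R_arcs G S m w"
    using assms(3) by (auto simp: directed_cycle_def)
  have "count_list (map arc_pair C) (a, b) = count_list (map arc_pair C) (b, a)" for a b
    using count_arc_pair_swap[OF assms(3)] .
  moreover have "fst p \<noteq> snd p" if p: "p \<in> set (map arc_pair C)" for p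
  proof -
    obtain e where "e \<in> set C" "p = arc_pair e"
      using p by auto
    then show ?thesis
      using simple_pair_conj_distinct[OF simple_pair_conj_arc_pair[OF arcs]] by simp
  qed
  ultimately have "length (filter (pair_conj G (s, t) \<circ> prod.swap) (map arc_pair C))
        = length (filter (pair_conj G (s, t)) (map arc_pair C))"
      "even (length (filter (\<lambda>p. pair_conj G (s, t) p \<or> pair_conj G (s, t) (prod.swap p)) (map arc_pair C)))"
    using swap_invariant_pair_counts by blast+
  then show ?thesis
    using arc_colour_eq_iff[OF arcs assms(4)] arc_colour_eq_swap_iff[OF arcs assms(4)]
    by (simp add: filter_map comp_def cong: filter_cong)
qed

end
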